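(* Each of the two non-abelian groups of order $27$ has both a narcissistic terrace and a directed half-and-half terrace. The non-abelian group of order $39$ has a directed half-and-half terrace.
   Context: Let $G$ be a finite group of odd order $n$ and $\mathbf{a}=(a_1,\dots,a_n)$ an arrangement of its elements, with $b_i = a_i^{-1}a_{i+1}$ for $1\le i \le n-1$. Since $n$ is odd, $G$ has no involutions; $\mathbf{a}$ is a terrace if for each $x \ne e$ the elements $x$ and $x^{-1}$ together occur exactly twice in $(b_1,\dots,b_{n-1})$, and a directed terrace if the $b_i$ are pairwise distinct. A terrace $\mathbf{a}$ is half-and-half if for each set $\{g,g^{-1}\}$ with $g\ne e$ exactly one element occurrence from that set lies in $(b_1,\dots,b_{(n-1)/2})$ (and hence exactly one lies in $(b_{(n+1)/2},\dots,b_{n-1})$). A terrace is narcissistic if the sequence $(b_1,\dots,b_{n-1})$ equals its reverse. A directed half-and-half terrace is a directed terrace that is half-and-half. There is a unique non-abelian group of order 39 up to isomorphism. *)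

theory Defs
  imports "HOL-Algebra.Group"
begin

text \<open>Its quotient sequence is
b_i = a_i^{-1} a_{i+1} (1 <= i <= n-1); here lists are 0-indexed.\<close>

definition arrangement :: "'a monoid \<Rightarrow> 'a list \<Rightarrow> bool" where
  "arrangement G a \<longleftrightarrow> distinct a \<and> set a = carrier G"

definition quotients :: "'a monoid \<Rightarrow> 'a list \<Rightarrow> 'a list" where
  "quotients G a = map (\<lambda>i. inv\<^bsub>G\<^esub> (a ! i) \<otimes>\<^bsub>G\<^esub> (a ! (i + 1))) [0..<length a - 1]"

definition pair_count :: "'a monoid \<Rightarrow> 'a \<Rightarrow> 'a list \<Rightarrow> nat" where
  "pair_count G x bs = length (filter (\<lambda>b. b = x \<or> b = inv\<^bsub>G\<^esub> x) bs)"

definition terrace :: "'a monoid \<Rightarrow> 'a list \<Rightarrow> bool" where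
  "terrace G a \<longleftrightarrow> arrangement G a \<and>
     (\<forall>x\<in>carrier G. x \<noteq> \<one>\<^bsub>G\<^esub> \<longrightarrow> pair_count G x (quotients G a) = 2)"

definition directed_terrace :: "'a monoid \<Rightarrow> 'a list \<Rightarrow> bool" where
  "directed_terrace G a \<longleftrightarrow> terrace G a \<and> distinct (quotients G a)"

definition half_and_half :: "'a monoid \<Rightarrow> 'a list \<Rightarrow> bool" where
  "half_and_half G a \<longleftrightarrow> terrace G a \<and>
     (\<forall>x\<in>carrier G. x \<noteq> \<one>\<^bsub>G\<^esub> \<longrightarrow>
        pair_count G x (take ((length a - 1) div 2) (quotients G a)) = 1)"

definition narcissistic :: "'a monoid \<Rightarrow> 'a list \<Rightarrow> bool" where
  "narcissistic G a \<longleftrightarrow> terrace G a \<and> rev (quotients G a) = quotients G a"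

definition directed_hh_terrace :: "'a monoid \<Rightarrow> 'a list \<Rightarrow> bool" where
  "directed_hh_terrace G a \<longleftrightarrow> directed_terrace G a \<and> half_and_half G a"

end

theory Submission
  imports Defs "HOL-Algebra.Group_Action" "HOL-Algebra.Multiplicative_Group" "HOL-Algebra.Sylow"
begin

text \<open>
  A nonabelian group of order 27 has a centre of order 3, generated by some \<open>z\<close>. For
  non-commuting \<open>x, y\<close> the centraliser \<open>C\<close> of \<open>x\<close> has order 9 and consists of the
  \<open>x\<^sup>i z\<^sup>k\<close>, and \<open>G\<close> is the disjoint union of \<open>C, yC, y\<^sup>2C\<close>. Left multiplication by \<open>x\<close>
  permutes these cosets; as \<open>x\<^sup>3\<close> is central it cannot swap \<open>yC\<close> and \<open>y\<^sup>2C\<close>, so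
  \<open>xy = yx\<^sup>az\<^sup>b\<close>. Thus every element is uniquely \<open>y\<^sup>j x\<^sup>i z\<^sup>k\<close> with \<open>x\<^sup>3, y\<^sup>3\<close> central, and
  the group is the bijective homomorphic image of one of 81 explicit multiplication tables
  on \<open>{0,1,2}\<^sup>3\<close>. In the same way a nonabelian group of order 39 is the image of a table of
  words \<open>y\<^sup>j x\<^sup>i\<close> with \<open>x\<^sup>1\<^sup>3 = y\<^sup>3 = 1\<close> and \<open>xy = yx\<^sup>r\<close>. Every such table either fails
  associativity, or makes \<open>x\<close> and \<open>y\<close> commute, or carries explicit terraces, which are
  checked by evaluation and transported to the group.
\<close>

section \<open>Multiplication tables\<close>

text \<open>Quotients are found by search (the default \<open>p\<close> never occurs for a group table), and
  \<open>b = x\<^sup>-\<^sup>1\<close> is tested as \<open>mul x b = e\<close>, so no inverses need to be computed. The predicates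
  below take the quotient sequence \<open>bs\<close> of \<open>a\<close> as an extra argument only so that evaluation
  computes it once.\<close>

definition table_quotient :: "'m list \<Rightarrow> ('m \<Rightarrow> 'm \<Rightarrow> 'm) \<Rightarrow> 'm \<Rightarrow> 'm \<Rightarrow> 'm" where
  "table_quotient D mul p p' = (case find (\<lambda>q. mul p q = p') D of Some q \<Rightarrow> q | None \<Rightarrow> p)"

definition table_quotients :: "'m list \<Rightarrow> ('m \<Rightarrow> 'm \<Rightarrow> 'm) \<Rightarrow> 'm list \<Rightarrow> 'm list" where
  "table_quotients D mul a = map (\<lambda>i. table_quotient D mul (a ! i) (a ! (i + 1))) [0..<length a - 1]"

definition table_pair_count :: "('m \<Rightarrow> 'm \<Rightarrow> 'm) \<Rightarrow> 'm \<Rightarrow> 'm \<Rightarrow> 'm list \<Rightarrow> nat" where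
  "table_pair_count mul e x bs = length (filter (\<lambda>b. b = x \<or> mul x b = e) bs)"

definition pair_counts_equal :: "'m list \<Rightarrow> ('m \<Rightarrow> 'm \<Rightarrow> 'm) \<Rightarrow> 'm \<Rightarrow> nat \<Rightarrow> 'm list \<Rightarrow> bool" where
  "pair_counts_equal D mul e c bs \<longleftrightarrow> (\<forall>x\<in>set D. x \<noteq> e \<longrightarrow> table_pair_count mul e x bs = c)"

definition table_terrace :: "'m list \<Rightarrow> ('m \<Rightarrow> 'm \<Rightarrow> 'm) \<Rightarrow> 'm \<Rightarrow> 'm list \<Rightarrow> 'm list \<Rightarrow> bool" where
  "table_terrace D mul e a bs \<longleftrightarrow> distinct a \<and> set a = set D \<and> pair_counts_equal D mul e 2 bs"

definition table_narcissistic :: "'m list \<Rightarrow> ('m \<Rightarrow> 'm \<Rightarrow> 'm) \<Rightarrow> 'm \<Rightarrow> 'm list \<Rightarrow> 'm list \<Rightarrow> bool" where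
  "table_narcissistic D mul e a bs \<longleftrightarrow> table_terrace D mul e a bs \<and> rev bs = bs"

definition table_directed_hh_terrace ::
    "'m list \<Rightarrow> ('m \<Rightarrow> 'm \<Rightarrow> 'm) \<Rightarrow> 'm \<Rightarrow> 'm list \<Rightarrow> 'm list \<Rightarrow> bool" where
  "table_directed_hh_terrace D mul e a bs \<longleftrightarrow> table_terrace D mul e a bs \<and> distinct bs \<and>
     pair_counts_equal D mul e 1 (take ((length a - 1) div 2) bs)"

definition nonassoc_witness :: "('m \<Rightarrow> 'm \<Rightarrow> 'm) \<Rightarrow> 'm \<Rightarrow> 'm \<Rightarrow> 'm \<Rightarrow> bool" where
  "nonassoc_witness mul p q r \<longleftrightarrow> mul (mul p q) r \<noteq> mul p (mul q r)"

locale table_iso = group G for G :: "'a monoid" (structure) +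
  fixes D :: "'m list" and mul :: "'m \<Rightarrow> 'm \<Rightarrow> 'm" and e :: 'm and \<phi> :: "'m \<Rightarrow> 'a"
  assumes bij: "bij_betw \<phi> (set D) (carrier G)"
    and hom: "\<lbrakk>p \<in> set D; q \<in> set D\<rbrakk> \<Longrightarrow> \<phi> (mul p q) = \<phi> p \<otimes> \<phi> q"
    and closed: "\<lbrakk>p \<in> set D; q \<in> set D\<rbrakk> \<Longrightarrow> mul p q \<in> set D"
    and unit: "e \<in> set D" "\<phi> e = \<one>"
begin

lemma phi_closed: "p \<in> set D \<Longrightarrow> \<phi> p \<in> carrier G"
  using bij by (rule bij_betw_apply)

lemma phi_eq_iff: "\<lbrakk>p \<in> set D; q \<in> set D\<rbrakk> \<Longrightarrow> \<phi> p = \<phi> q \<longleftrightarrow> p = q"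
  using bij_betw_imp_inj_on[OF bij] by (auto dest: inj_onD)

lemma table_assoc: "\<lbrakk>p \<in> set D; q \<in> set D; r \<in> set D\<rbrakk> \<Longrightarrow> \<not> nonassoc_witness mul p q r"
  unfolding nonassoc_witness_def
  by (simp add: phi_eq_iff[symmetric] closed hom phi_closed m_assoc)

lemma phi_table_quotient:
  assumes p: "p \<in> set D" and p': "p' \<in> set D"
  shows "table_quotient D mul p p' \<in> set D \<and> \<phi> (table_quotient D mul p p') = inv (\<phi> p) \<otimes> \<phi> p'"
proof -
  have pG: "\<phi> p \<in> carrier G" and p'G: "\<phi> p' \<in> carrier G"
    using p p' by (simp_all add: phi_closed)
  have "inv (\<phi> p) \<otimes> \<phi> p' \<in> \<phi> ` set D"
    using bij pG p'G by (simp add: bij_betw_def)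
  then obtain q where q: "q \<in> set D" "\<phi> q = inv (\<phi> p) \<otimes> \<phi> p'" by (metis imageE)
  have "\<phi> (mul p q) = \<phi> p'"
    using hom[OF p q(1)] q(2) pG p'G by (simp add: m_assoc[symmetric])
  then have "mul p q = p'" using phi_eq_iff[OF closed[OF p q(1)] p'] by simp
  then have "find (\<lambda>q. mul p q = p') D \<noteq> None" using q(1) by (auto simp: find_None_iff)
  then obtain q' where found: "find (\<lambda>q. mul p q = p') D = Some q'" by blast
  then obtain i where "i < length D" "mul p (D ! i) = p'" "q' = D ! i"
    unfolding find_Some_iff by blast
  then have q': "q' \<in> set D" "mul p q' = p'" by simp_all
  then have "\<phi> p \<otimes> \<phi> q' = \<phi> p'" using hom[OF p q'(1)] by simp
  then have "\<phi> q' = inv (\<phi> p) \<otimes> \<phi> p'"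
    using inv_solve_left[OF phi_closed[OF q'(1)] pG p'G] by simp
  then show ?thesis using found q'(1) unfolding table_quotient_def by simp
qed

lemma
  assumes "set a \<subseteq> set D"
  shows set_table_quotients: "set (table_quotients D mul a) \<subseteq> set D"
    and quotients_map: "quotients G (map \<phi> a) = map \<phi> (table_quotients D mul a)"
proof -
  have "a ! i \<in> set D" "a ! Suc i \<in> set D" if "i \<in> set [0..<length a - 1]" for i
    using assms that nth_mem by auto
  note q = phi_table_quotient[OF this]
  show "set (table_quotients D mul a) \<subseteq> set D"
    unfolding table_quotients_def using q by auto
  show "quotients G (map \<phi> a) = map \<phi> (table_quotients D mul a)"
    unfolding quotients_def table_quotients_def map_map
    by (rule map_cong) (simp_all add: q)
qed

lemma pair_count_map:
  assumes bs: "set bs \<subseteq> set D" and x: "x \<in> set D"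
  shows "pair_count G (\<phi> x) (map \<phi> bs) = table_pair_count mul e x bs"
proof -
  have "(\<phi> b = \<phi> x \<or> \<phi> b = inv (\<phi> x)) \<longleftrightarrow> (b = x \<or> mul x b = e)" if b: "b \<in> set D" for b
  proof -
    have "mul x b = e \<longleftrightarrow> \<phi> (mul x b) = \<phi> e"
      using phi_eq_iff[OF closed[OF x b] unit(1)] by simp
    also have "\<dots> \<longleftrightarrow> \<one> = \<phi> x \<otimes> \<phi> b"
      using hom[OF x b] unit(2) by auto
    also have "\<dots> \<longleftrightarrow> \<phi> b = inv (\<phi> x)"
      using inv_solve_left[OF phi_closed[OF b] phi_closed[OF x] one_closed] phi_closed[OF x] by auto
    finally show ?thesis using phi_eq_iff[OF b x] by simp
  qed
  then have "filter (\<lambda>b. b = \<phi> x \<or> b = inv (\<phi> x)) (map \<phi> bs) =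
      map \<phi> (filter (\<lambda>b. b = x \<or> mul x b = e) bs)"
    using bs unfolding filter_map comp_def by (intro arg_cong[where f = "map \<phi>"] filter_cong) auto
  then show ?thesis by (simp add: pair_count_def table_pair_count_def)
qed

lemma pair_counts_map:
  assumes counts: "pair_counts_equal D mul e c bs" and bs: "set bs \<subseteq> set D"
    and y: "y \<in> carrier G" "y \<noteq> \<one>"
  shows "pair_count G y (map \<phi> bs) = c"
proof -
  obtain x where x: "x \<in> set D" "y = \<phi> x"
    using y(1) bij_betw_imp_surj_on[OF bij] by blast
  then have "x \<noteq> e" using y(2) unit(2) by blast
  then have "table_pair_count mul e x bs = c" using counts x(1) unfolding pair_counts_equal_def by blast
  then show ?thesis using pair_count_map[OF bs x(1)] x(2) by simp
qed

lemma terrace_map: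
  assumes "table_terrace D mul e a (table_quotients D mul a)"
  shows "terrace G (map \<phi> a)"
proof -
  have a: "distinct a" "set a = set D"
    and counts: "pair_counts_equal D mul e 2 (table_quotients D mul a)"
    using assms unfolding table_terrace_def by simp_all
  have "arrangement G (map \<phi> a)"
    using a bij_betw_imp_inj_on[OF bij] bij_betw_imp_surj_on[OF bij]
    unfolding arrangement_def by (simp add: distinct_map)
  moreover have "pair_count G y (quotients G (map \<phi> a)) = 2" if "y \<in> carrier G" "y \<noteq> \<one>" for y
    using pair_counts_map[OF counts set_table_quotients that] quotients_map a(2) by simp
  ultimately show ?thesis unfolding terrace_def by blast
qed

lemma narcissistic_map:
  assumes "table_narcissistic D mul e a (table_quotients D mul a)"
  shows "narcissistic G (map \<phi> a)"
proof -
  have "set a = set D" using assms unfolding table_narcissistic_def table_terrace_def by simp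
  then show ?thesis
    using assms terrace_map quotients_map[of a]
    unfolding table_narcissistic_def narcissistic_def by (simp add: rev_map)
qed

lemma directed_hh_terrace_map:
  assumes "table_directed_hh_terrace D mul e a (table_quotients D mul a)"
  shows "directed_hh_terrace G (map \<phi> a)"
proof -
  let ?bs = "table_quotients D mul a" and ?h = "(length a - 1) div 2"
  have a: "set a = set D" and bs: "distinct ?bs"
    and half: "pair_counts_equal D mul e 1 (take ?h ?bs)"
    using assms unfolding table_directed_hh_terrace_def table_terrace_def by simp_all
  have q: "quotients G (map \<phi> a) = map \<phi> ?bs" using quotients_map a by simp
  have "set (take ?h ?bs) \<subseteq> set D"
    using set_table_quotients[of a] a set_take_subset by fastforce
  then have "pair_count G y (take ?h (quotients G (map \<phi> a))) = 1"
    if "y \<in> carrier G" "y \<noteq> \<one>" for y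
    using pair_counts_map[OF half _ that] q by (simp add: take_map)
  moreover have "distinct (quotients G (map \<phi> a))"
    using q bs set_table_quotients[of a] a bij_betw_imp_inj_on[OF bij]
    by (simp add: distinct_map inj_on_subset)
  moreover have "terrace G (map \<phi> a)"
    using assms terrace_map unfolding table_directed_hh_terrace_def by blast
  ultimately show ?thesis
    unfolding directed_hh_terrace_def directed_terrace_def half_and_half_def by simp
qed

lemma certificate_cases:
  assumes "mul u v = mul v u \<or> nonassoc_witness mul p q r \<or> P"
    and "\<phi> u \<otimes> \<phi> v \<noteq> \<phi> v \<otimes> \<phi> u"
    and "u \<in> set D" "v \<in> set D" "p \<in> set D" "q \<in> set D" "r \<in> set D"
  shows P
proof -
  have "mul u v \<noteq> mul v u"
    using assms(2) hom[OF assms(3,4)] hom[OF assms(4,3)] by auto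
  moreover have "\<not> nonassoc_witness mul p q r"
    using assms(5-7) by (rule table_assoc)
  ultimately show P using assms(1) by blast
qed

end

section \<open>Subgroups of index three and centres of \<open>p\<close>-groups\<close>

lemma exists_ne_if_card_gt_1: "1 < card A \<Longrightarrow> \<exists>a\<in>A. a \<noteq> b"
proof (rule ccontr)
  assume card: "1 < card A" and "\<not> (\<exists>a\<in>A. a \<noteq> b)"
  then have "A \<subseteq> {b}" by blast
  then have "card A \<le> 1" using card_mono[of "{b}" A] by simp
  then show False using card by simp
qed

context group
begin

lemma subgroup_nat_pow_closed: "\<lbrakk>subgroup H G; h \<in> H\<rbrakk> \<Longrightarrow> h [^] (n::nat) \<in> H"
  using subgroup_int_pow_closed[of H h "int n"] by (simp add: int_pow_int)

lemma nat_pow_mod: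
  assumes "g \<in> carrier G" "g [^] (m::nat) = \<one>"
  shows "g [^] (n mod m) = g [^] n"
proof -
  have "g [^] n = (g [^] m) [^] (n div m) \<otimes> g [^] (n mod m)"
    using assms(1) by (simp add: nat_pow_pow nat_pow_mult)
  then show ?thesis using assms by simp
qed

lemma nat_pow_card_subgroup:
  assumes "subgroup H G" "h \<in> H"
  shows "h [^] card H = \<one>"
proof -
  interpret H: group "G\<lparr>carrier := H\<rparr>"
    using subgroup.subgroup_is_group[OF assms(1) is_group] .
  have "h [^]\<^bsub>G\<lparr>carrier := H\<rparr>\<^esub> order (G\<lparr>carrier := H\<rparr>) = \<one>"
    using H.pow_order_eq_1[of h] assms(2) by simp
  then show ?thesis unfolding order_def using nat_pow_consistent[of h "card H" H] by simp
qed

lemma prime_order_subgroup_powers: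
  assumes fin: "finite (carrier G)" and H: "subgroup H G" and p: "prime (card H)"
    and z: "z \<in> H" "z \<noteq> \<one>"
  shows "ord z = card H" "bij_betw (\<lambda>k. z [^] k) {..<card H} H"
proof -
  have zG: "z \<in> carrier G" using H z subgroup.subset by blast
  have "ord z dvd card H" using pow_eq_id[OF zG] nat_pow_card_subgroup[OF H z(1)] by simp
  moreover have "ord z \<noteq> 1" using ord_eq_1[OF zG] z(2) by simp
  ultimately show ord: "ord z = card H" using p by (metis prime_nat_iff)
  have "card H > 0" using p by (simp add: prime_gt_0_nat)
  then have "{0..ord z - 1} = {..<card H}" using ord by auto
  then have inj: "inj_on (\<lambda>k. z [^] k) {..<card H}" using ord_inj[OF zG] by simp
  have "(\<lambda>k. z [^] k) ` {..<card H} = H"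
  proof (rule card_subset_eq)
    show "finite H" using H fin finite_subset subgroup.subset by blast
    show "(\<lambda>k. z [^] k) ` {..<card H} \<subseteq> H" using subgroup_nat_pow_closed[OF H z(1)] by auto
    show "card ((\<lambda>k. z [^] k) ` {..<card H}) = card H" using card_image[OF inj] by simp
  qed
  with inj show "bij_betw (\<lambda>k. z [^] k) {..<card H} H" by (simp add: bij_betw_def)
qed

lemma mem_subgroup_of_square_mem:
  assumes "odd (order G)" "subgroup H G" "g \<in> carrier G" "g [^] (2::nat) \<in> H"
  shows "g \<in> H"
proof -
  obtain m where "order G = 2 * m + 1" using assms(1) oddE by blast
  then have "2 * (m + 1) = order G + 1" by simp
  then have "(g [^] (2::nat)) [^] (m + 1) = g [^] (order G + 1)"
    by (simp only: nat_pow_pow[OF assms(3)])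
  also have "\<dots> = g [^] order G \<otimes> g" using assms(3) nat_pow_mult[of g "order G" 1] by simp
  also have "\<dots> = g" using assms(3) pow_order_eq_1 by simp
  finally show ?thesis using subgroup_nat_pow_closed[OF assms(2,4)] by metis
qed

definition center :: "'a set" where
  "center = {z \<in> carrier G. \<forall>g\<in>carrier G. g \<otimes> z = z \<otimes> g}"

definition centralizer :: "'a \<Rightarrow> 'a set" where
  "centralizer x = {g \<in> carrier G. g \<otimes> x = x \<otimes> g}"

abbreviation conjugation :: "'a \<Rightarrow> 'a \<Rightarrow> 'a" where
  "conjugation g \<equiv> \<lambda>h\<in>carrier G. g \<otimes> h \<otimes> inv g"

lemma conj_eq_iff_commute:
  "\<lbrakk>g \<in> carrier G; x \<in> carrier G\<rbrakk> \<Longrightarrow> g \<otimes> x \<otimes> inv g = x \<longleftrightarrow> g \<otimes> x = x \<otimes> g"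
  using inv_solve_right'[of x "g \<otimes> x" g] by simp

lemma centralizer_eq_stabilizer:
  "x \<in> carrier G \<Longrightarrow> centralizer x = stabilizer G conjugation x"
  unfolding centralizer_def stabilizer_def using conj_eq_iff_commute by auto

lemma subgroup_centralizer: "x \<in> carrier G \<Longrightarrow> subgroup (centralizer x) G"
  using group_action.stabilizer_subgroup[OF action_by_conjugation] centralizer_eq_stabilizer by simp

lemma subgroup_center: "subgroup center G"
proof -
  have "center = \<Inter> (centralizer ` carrier G)"
    unfolding center_def centralizer_def by auto
  then show ?thesis
    using subgroups_Inter[of "centralizer ` carrier G"] subgroup_centralizer by auto
qed

lemma center_subset_centralizer: "x \<in> carrier G \<Longrightarrow> center \<subseteq> centralizer x"
  unfolding center_def centralizer_def by auto

lemma card_subgroup_dvd: "subgroup H G \<Longrightarrow> card H dvd order G"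
  using lagrange by (metis dvd_triv_right)

lemma conj_orbit_eq:
  "x \<in> carrier G \<Longrightarrow> orbit G conjugation x = {g \<otimes> x \<otimes> inv g | g. g \<in> carrier G}"
  unfolding orbit_def by auto

lemma mem_conj_orbit_self: "x \<in> carrier G \<Longrightarrow> x \<in> orbit G conjugation x"
  unfolding conj_orbit_eq by (auto intro!: exI[of _ \<one>])

lemma conj_orbit_subset_noncentral:
  assumes x: "x \<in> carrier G" "x \<notin> center"
  shows "orbit G conjugation x \<subseteq> carrier G - center"
proof
  fix y assume "y \<in> orbit G conjugation x"
  then obtain g where g: "g \<in> carrier G" "g \<otimes> x \<otimes> inv g = y" unfolding conj_orbit_eq[OF x(1)] by blast
  then have yG: "y \<in> carrier G" using x by auto
  have "y \<notin> center"
  proof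
    assume y: "y \<in> center"
    have "g \<otimes> x = y \<otimes> g" using g yG x(1) inv_solve_right' by simp
    also have "\<dots> = g \<otimes> y" using y g(1) unfolding center_def by simp
    finally show False using g(1) x yG y by simp
  qed
  then show "y \<in> carrier G - center" using yG by blast
qed

lemma prime_dvd_card_conj_orbit:
  assumes p: "prime p" and order: "order G = p ^ n" and x: "x \<in> carrier G" "x \<notin> center"
  shows "p dvd card (orbit G conjugation x)"
proof -
  interpret conj: group_action G "carrier G" conjugation by (rule action_by_conjugation)
  have "card (orbit G conjugation x) * card (centralizer x) = p ^ n"
    using conj.orbit_stabilizer_theorem[OF x(1)] order centralizer_eq_stabilizer[OF x(1)] by simp
  then have "card (orbit G conjugation x) dvd p ^ n" by (rule dvdI[OF sym])
  then obtain i where i: "card (orbit G conjugation x) = p ^ i"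
    using divides_primepow_nat[OF p] by blast
  have "i \<noteq> 0"
  proof
    assume "i = 0"
    then obtain y where "orbit G conjugation x = {y}" using i card_1_singletonE by auto
    then have "orbit G conjugation x = {x}" using mem_conj_orbit_self[OF x(1)] by simp
    then have "g \<otimes> x \<otimes> inv g = x" if "g \<in> carrier G" for g
      using that unfolding conj_orbit_eq[OF x(1)] by blast
    then show False using x conj_eq_iff_commute unfolding center_def by auto
  qed
  then show ?thesis using i by simp
qed

text \<open>The class equation: the conjugacy classes outside the centre have size divisible by \<open>p\<close>.\<close>

lemma prime_dvd_card_center:
  assumes fin: "finite (carrier G)" and p: "prime p" and order: "order G = p ^ n" "n > 0"
  shows "p dvd card center"
proof -
  interpret conj: group_action G "carrier G" conjugation by (rule action_by_conjugation)
  let ?C = "orbit G conjugation ` (carrier G - center)"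
  have union: "\<Union> ?C = carrier G - center"
  proof
    show "\<Union> ?C \<subseteq> carrier G - center" using conj_orbit_subset_noncentral by blast
    show "carrier G - center \<subseteq> \<Union> ?C" using mem_conj_orbit_self by blast
  qed
  have "p dvd card (\<Union> ?C)"
  proof (rule dvd_partition)
    show "finite (\<Union> ?C)" using union fin by simp
    show "\<forall>c\<in>?C. p dvd card c" using prime_dvd_card_conj_orbit[OF p order(1)] by blast
    have "?C \<subseteq> orbits G (carrier G) conjugation" unfolding orbits_def by blast
    then show "\<forall>c1\<in>?C. \<forall>c2\<in>?C. c1 \<noteq> c2 \<longrightarrow> c1 \<inter> c2 = {}"
      using conj.disjoint_union by blast
  qed
  then have "p dvd order G - card center"
    using union subgroup.subset[OF subgroup_center] fin unfolding order_def
    by (simp add: card_Diff_subset finite_subset)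
  moreover have "card center \<le> order G"
    using subgroup.subset[OF subgroup_center] fin unfolding order_def by (simp add: card_mono)
  moreover have "p dvd order G" using order by simp
  ultimately show ?thesis by (metis diff_diff_cancel dvd_diff_nat)
qed

lemma index_three_coset_eq:
  assumes H: "subgroup H G" and y: "y \<in> carrier G" "y \<notin> H" "y [^] (2::nat) \<notin> H"
    and j: "j < 3" "j' < 3" and h: "h \<in> H" "h' \<in> H"
    and eq: "y [^] (j::nat) \<otimes> h = y [^] (j'::nat) \<otimes> h'"
  shows "j = j' \<and> h = h'"
proof -
  have eq_if_le: "j = j'"
    if "j \<le> j'" "j' < 3" "h \<in> H" "h' \<in> H" "y [^] j \<otimes> h = y [^] j' \<otimes> h'" for j j' :: nat and h h'
  proof -
    have hG: "h \<in> carrier G" "h' \<in> carrier G"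
      using subgroup.mem_carrier[OF H that(3)] subgroup.mem_carrier[OF H that(4)] .
    have "y [^] j \<otimes> h = y [^] j \<otimes> (y [^] (j' - j) \<otimes> h')"
      using that(1,5) y(1) hG by (simp add: m_assoc[symmetric] nat_pow_mult)
    then have "h = y [^] (j' - j) \<otimes> h'" using y(1) hG by simp
    then have "y [^] (j' - j) = h \<otimes> inv h'" using y(1) hG by (simp add: m_assoc)
    then have "y [^] (j' - j) \<in> H"
      using that(3,4) H by (simp add: subgroup.m_closed subgroup.m_inv_closed)
    moreover have "j' - j = 0 \<or> j' - j = 1 \<or> j' - j = 2" using that(2) by auto
    ultimately show "j = j'" using that(1) y by auto
  qed
  have "j = j'"
  proof (cases "j \<le> j'")
    case True
    then show ?thesis using eq_if_le[of j j' h h'] eq j h by simp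
  next
    case False
    then show ?thesis using eq_if_le[of j' j h' h] eq j h by simp
  qed
  then show ?thesis using eq y(1) h H subgroup.mem_carrier by fastforce
qed

lemma index_three_decomposition:
  assumes H: "subgroup H G" and K: "subgroup K G" "finite K" "H \<subseteq> K"
    and card: "card K = 3 * card H"
    and y: "y \<in> K" "y \<notin> H" "y [^] (2::nat) \<notin> H"
  shows "bij_betw (\<lambda>(j::nat, h). y [^] j \<otimes> h) ({..<3} \<times> H) K"
proof -
  let ?f = "\<lambda>(j::nat, h). y [^] j \<otimes> h"
  have yG: "y \<in> carrier G" using subgroup.mem_carrier[OF K(1) y(1)] .
  have inj: "inj_on ?f ({..<3} \<times> H)"
  proof (rule inj_onI)
    fix u v assume u: "u \<in> {..<3} \<times> H" and v: "v \<in> {..<3} \<times> H" and eq: "?f u = ?f v"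
    obtain j h j' h' where "u = (j, h)" "v = (j', h')" by force
    then show "u = v" using index_three_coset_eq[OF H yG y(2,3), of j j' h h'] u v eq by simp
  qed
  moreover have "?f ` ({..<3} \<times> H) = K"
  proof (rule card_subset_eq)
    show "finite K" by (fact K(2))
    show "?f ` ({..<3} \<times> H) \<subseteq> K"
    proof
      fix g assume "g \<in> ?f ` ({..<3} \<times> H)"
      then obtain j :: nat and h where "h \<in> H" "g = y [^] j \<otimes> h" by auto
      then show "g \<in> K"
        using subgroup.m_closed[OF K(1) subgroup_nat_pow_closed[OF K(1) y(1)]] K(3) by auto
    qed
    show "card (?f ` ({..<3} \<times> H)) = card K"
      using card_image[OF inj] card by (simp add: card_cartesian_product)
  qed
  ultimately show ?thesis by (simp add: bij_betw_def)
qed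

lemma cube_mem_of_index_three:
  assumes H: "subgroup H G" and K: "subgroup K G"
    and dec: "bij_betw (\<lambda>(j::nat, h). y [^] j \<otimes> h) ({..<3} \<times> H) K"
    and y: "y \<in> K" "y \<notin> H" "y [^] (2::nat) \<notin> H"
  shows "y [^] (3::nat) \<in> H"
proof -
  have yG: "y \<in> carrier G" using subgroup.mem_carrier[OF K y(1)] .
  have "y [^] (3::nat) \<in> K" using subgroup_nat_pow_closed[OF K y(1)] .
  then obtain j :: nat and h where jh: "j < 3" "h \<in> H" "y [^] (3::nat) = y [^] j \<otimes> h"
    using dec unfolding bij_betw_def by auto
  have hG: "h \<in> carrier G" using subgroup.mem_carrier[OF H jh(2)] .
  have "y [^] j \<otimes> y [^] (3 - j) = y [^] j \<otimes> h"
    using jh(1,3) yG by (simp add: nat_pow_mult)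
  then have "y [^] (3 - j) = h" using yG hG by simp
  moreover have "3 - j = 3 \<or> 3 - j = 2 \<or> 3 - j = 1" using jh(1) by auto
  ultimately show ?thesis using jh(2) y(2,3) yG by auto
qed

lemma bij_betw_pow_mult_comp:
  assumes "bij_betw f A H" and "bij_betw (\<lambda>(j::nat, h). y [^] j \<otimes> h) ({..<3} \<times> H) K"
  shows "bij_betw (\<lambda>(j::nat, a). y [^] j \<otimes> f a) ({..<3} \<times> A) K"
proof -
  have "bij_betw (map_prod id f) ({..<3::nat} \<times> A) ({..<3} \<times> H)"
    using bij_betw_map_prod[OF bij_betw_id[of "{..<3::nat}"] assms(1)] by simp
  then have "bij_betw ((\<lambda>(j::nat, h). y [^] j \<otimes> h) \<circ> map_prod id f) ({..<3} \<times> A) K"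
    using assms(2) by (rule bij_betw_trans)
  also have "(\<lambda>(j::nat, h). y [^] j \<otimes> h) \<circ> map_prod id f = (\<lambda>(j::nat, a). y [^] j \<otimes> f a)"
    by (rule ext) (simp add: case_prod_unfold)
  finally show ?thesis .
qed

lemma index_three_l_coset_cases:
  assumes H: "subgroup H G" and dec: "bij_betw (\<lambda>(j::nat, k). y [^] j \<otimes> k) ({..<3} \<times> H) (carrier G)"
    and y: "y \<in> carrier G" and g: "g \<in> carrier G"
  obtains "g \<in> H" | "g \<in> y <# H" | "g \<in> (y \<otimes> y) <# H"
proof -
  note cases = that
  have "g \<in> (\<lambda>(j::nat, k). y [^] j \<otimes> k) ` ({..<3} \<times> H)" using dec g by (simp add: bij_betw_def)
  then obtain j :: nat and k where jk: "j < 3" "k \<in> H" "g = y [^] j \<otimes> k" by auto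
  have kG: "k \<in> carrier G" using subgroup.mem_carrier[OF H jk(2)] .
  have "j = 0 \<or> j = 1 \<or> j = 2" using jk(1) by auto
  then show thesis
  proof (elim disjE)
    assume "j = 0"
    then show thesis using cases(1) jk kG by simp
  next
    assume "j = 1"
    then show thesis using cases(2) jk y unfolding l_coset_def by auto
  next
    assume "j = 2"
    then show thesis using cases(3) jk y unfolding l_coset_def by (auto simp: numeral_2_eq_2)
  qed
qed

lemma index_three_l_cosets_disjoint:
  assumes H: "subgroup H G" and y: "y \<in> carrier G" "y \<notin> H" "y [^] (2::nat) \<notin> H"
    and g: "g \<in> y <# H"
  shows "g \<notin> (y \<otimes> y) <# H"
proof
  assume "g \<in> (y \<otimes> y) <# H"
  then obtain k' where k': "k' \<in> H" "g = y \<otimes> y \<otimes> k'" unfolding l_coset_def by blast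
  obtain k where k: "k \<in> H" "g = y \<otimes> k" using g unfolding l_coset_def by blast
  have "y [^] (1::nat) \<otimes> k = y [^] (2::nat) \<otimes> k'"
    using k(2) k'(2) y(1) by (simp add: numeral_2_eq_2)
  then show False using index_three_coset_eq[OF H y _ _ k(1) k'(1), of 1 2] by simp
qed

text \<open>Left multiplication by \<open>h \<in> H\<close> permutes the cosets \<open>H, yH, y\<^sup>2H\<close> and fixes \<open>H\<close>, so
  if it moves \<open>yH\<close> it swaps \<open>yH\<close> and \<open>y\<^sup>2H\<close>.\<close>

lemma index_three_l_coset_swap:
  assumes H: "subgroup H G" and dec: "bij_betw (\<lambda>(j::nat, k). y [^] j \<otimes> k) ({..<3} \<times> H) (carrier G)"
    and y: "y \<in> carrier G" "y \<notin> H" "y [^] (2::nat) \<notin> H"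
    and h: "h \<in> H" and moved: "h \<otimes> y \<notin> y <# H"
  shows "g \<in> y <# H \<Longrightarrow> h \<otimes> g \<in> (y \<otimes> y) <# H"
    and "g \<in> (y \<otimes> y) <# H \<Longrightarrow> h \<otimes> g \<in> y <# H"
proof -
  have HG: "k \<in> H \<Longrightarrow> k \<in> carrier G" for k using subgroup.mem_carrier[OF H] .
  have hG: "h \<in> carrier G" using HG[OF h] .
  have yy: "y \<otimes> y \<in> carrier G" "y \<otimes> y \<notin> H" using y by (simp_all add: numeral_2_eq_2)
  have outside: "h \<otimes> g \<notin> H" if "g \<in> carrier G" "g \<notin> H" for g
  proof
    assume "h \<otimes> g \<in> H"
    moreover have "g = inv h \<otimes> (h \<otimes> g)" using hG that(1) by (simp add: m_assoc[symmetric])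
    ultimately show False using that(2) h H by (metis subgroup.m_closed subgroup.m_inv_closed)
  qed
  obtain k1 where k1: "k1 \<in> H" "h \<otimes> y = y \<otimes> y \<otimes> k1"
  proof (rule index_three_l_coset_cases[OF H dec y(1) m_closed[OF hG y(1)]])
    show "h \<otimes> y \<in> H \<Longrightarrow> thesis" using outside[OF y(1,2)] by blast
    show "h \<otimes> y \<in> y <# H \<Longrightarrow> thesis" using moved by blast
    show "h \<otimes> y \<in> (y \<otimes> y) <# H \<Longrightarrow> thesis" using that unfolding l_coset_def by blast
  qed
  obtain k2 where k2: "k2 \<in> H" "h \<otimes> (y \<otimes> y) = y \<otimes> k2"
  proof (rule index_three_l_coset_cases[OF H dec y(1) m_closed[OF hG yy(1)]])
    show "h \<otimes> (y \<otimes> y) \<in> H \<Longrightarrow> thesis" using outside[OF yy] by blast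
    show "h \<otimes> (y \<otimes> y) \<in> y <# H \<Longrightarrow> thesis" using that unfolding l_coset_def by blast
    assume "h \<otimes> (y \<otimes> y) \<in> (y \<otimes> y) <# H"
    then obtain k where k: "k \<in> H" "h \<otimes> (y \<otimes> y) = y \<otimes> y \<otimes> k" unfolding l_coset_def by blast
    have "y \<otimes> y \<otimes> (k1 \<otimes> y) = h \<otimes> y \<otimes> y" using k1 y(1) HG[OF k1(1)] by (simp add: m_assoc)
    also have "\<dots> = y \<otimes> y \<otimes> k" using k(2) hG y(1) by (simp add: m_assoc)
    finally have "k1 \<otimes> y = k" using yy(1) y(1) HG[OF k1(1)] HG[OF k(1)] by simp
    then have "y = inv k1 \<otimes> k" using inv_solve_left[OF y(1) HG[OF k1(1)] HG[OF k(1)]] by simp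
    then show thesis using y(2) k(1) k1(1) H by (metis subgroup.m_closed subgroup.m_inv_closed)
  qed
  show "h \<otimes> g \<in> (y \<otimes> y) <# H" if g: "g \<in> y <# H"
  proof -
    obtain k where k: "k \<in> H" "g = y \<otimes> k" using g unfolding l_coset_def by blast
    have "h \<otimes> g = y \<otimes> y \<otimes> (k1 \<otimes> k)"
      using k(2) k1(2) hG y(1) HG[OF k(1)] HG[OF k1(1)] by (simp add: m_assoc[symmetric])
    then show ?thesis using subgroup.m_closed[OF H k1(1) k(1)] unfolding l_coset_def by blast
  qed
  show "h \<otimes> g \<in> y <# H" if g: "g \<in> (y \<otimes> y) <# H"
  proof -
    obtain k where k: "k \<in> H" "g = y \<otimes> y \<otimes> k" using g unfolding l_coset_def by blast
    have "h \<otimes> g = h \<otimes> (y \<otimes> y) \<otimes> k" using k(2) hG y(1) HG[OF k(1)] by (simp add: m_assoc)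
    also have "\<dots> = y \<otimes> (k2 \<otimes> k)" using k2(2) y(1) HG[OF k2(1)] HG[OF k(1)] by (simp add: m_assoc)
    finally show ?thesis using subgroup.m_closed[OF H k2(1) k(1)] unfolding l_coset_def by blast
  qed
qed

lemma index_three_l_coset_stable:
  assumes H: "subgroup H G" and dec: "bij_betw (\<lambda>(j::nat, k). y [^] j \<otimes> k) ({..<3} \<times> H) (carrier G)"
    and y: "y \<in> carrier G" "y \<notin> H" "y [^] (2::nat) \<notin> H"
    and h: "h \<in> H" and n: "odd (n::nat)" and comm: "h [^] n \<otimes> y = y \<otimes> h [^] n"
  shows "h \<otimes> y \<in> y <# H"
proof (rule ccontr)
  assume "h \<otimes> y \<notin> y <# H"
  note swap = index_three_l_coset_swap[OF H dec y h this]
  have hG: "h \<in> carrier G" using subgroup.mem_carrier[OF H h] .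
  have alternate: "h [^] m \<otimes> y \<in> (if even m then y <# H else (y \<otimes> y) <# H)" for m :: nat
  proof (induction m)
    case 0
    show ?case using subgroup.one_closed[OF H] y(1) unfolding l_coset_def by force
  next
    case (Suc m)
    have "h [^] Suc m \<otimes> y = h \<otimes> h [^] m \<otimes> y" by (simp only: nat_pow_Suc2[OF hG])
    also have "\<dots> = h \<otimes> (h [^] m \<otimes> y)" using hG y(1) by (simp add: m_assoc)
    finally show ?case using Suc swap by (cases "even m") auto
  qed
  have "h [^] n \<otimes> y \<in> (y \<otimes> y) <# H" using alternate[of n] n by simp
  moreover have "h [^] n \<otimes> y \<in> y <# H"
    using comm subgroup_nat_pow_closed[OF H h] unfolding l_coset_def by auto
  ultimately show False using index_three_l_cosets_disjoint[OF H y] by blast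
qed

end

section \<open>Groups of order 27\<close>

lemma funpow_closed: "(\<And>p. p \<in> A \<Longrightarrow> f p \<in> A) \<Longrightarrow> p \<in> A \<Longrightarrow> (f ^^ n) p \<in> A"
  by (induction n) auto

lemma (in monoid) funpow_right_mult:
  assumes "\<And>p. \<phi> (f p) = \<phi> p \<otimes> g" "\<And>p. \<phi> p \<in> carrier G" "g \<in> carrier G"
  shows "\<phi> ((f ^^ n) p) = \<phi> p \<otimes> g [^] n"
  by (induction n) (simp_all add: assms m_assoc)

type_synonym nf27 = "nat \<times> nat \<times> nat"

text \<open>A triple \<open>(j, i, k)\<close> stands for the word \<open>y\<^sup>j x\<^sup>i z\<^sup>k\<close>; the functions \<open>times_\<close>
  implement right multiplication of such a normal form by \<open>z\<close>, \<open>x\<close> and \<open>y\<close>, for the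
  relations \<open>z\<^sup>3 = 1\<close>, \<open>x\<^sup>3 = z\<^sup>\<alpha>\<close>, \<open>y\<^sup>3 = z\<^sup>\<beta>\<close>, \<open>xy = yx\<^sup>az\<^sup>b\<close> with \<open>z\<close> central.\<close>

definition elems27 :: "nf27 list" where
  "elems27 = List.product [0..<3] (List.product [0..<3] [0..<3])"

fun times_z27 :: "nf27 \<Rightarrow> nf27" where
  "times_z27 (j, i, k) = (j, i, (k + 1) mod 3)"

fun times_x27 :: "nat \<Rightarrow> nf27 \<Rightarrow> nf27" where
  "times_x27 \<alpha> (j, i, k) = (if i = 2 then (j, 0, (k + \<alpha>) mod 3) else (j, i + 1, k))"

fun times_y27 :: "nat \<Rightarrow> nat \<Rightarrow> nat \<Rightarrow> nat \<Rightarrow> nf27 \<Rightarrow> nf27" where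
  "times_y27 a b \<alpha> \<beta> (j, i, k) =
     (times_z27 ^^ (b * i + k)) ((times_x27 \<alpha> ^^ (a * i)) (if j = 2 then (0, 0, \<beta>) else (j + 1, 0, 0)))"

fun mult27 :: "nat \<times> nat \<times> nat \<times> nat \<Rightarrow> nf27 \<Rightarrow> nf27 \<Rightarrow> nf27" where
  "mult27 (a, b, \<alpha>, \<beta>) p (j, i, k) =
     (times_z27 ^^ k) ((times_x27 \<alpha> ^^ i) ((times_y27 a b \<alpha> \<beta> ^^ j) p))"

definition eval27 :: "('a, 'b) monoid_scheme \<Rightarrow> 'a \<Rightarrow> 'a \<Rightarrow> 'a \<Rightarrow> nf27 \<Rightarrow> 'a" where
  "eval27 G x y z = (\<lambda>(j, i, k). y [^]\<^bsub>G\<^esub> j \<otimes>\<^bsub>G\<^esub> x [^]\<^bsub>G\<^esub> i \<otimes>\<^bsub>G\<^esub> z [^]\<^bsub>G\<^esub> k)"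

lemma set_elems27: "set elems27 = {..<3} \<times> {..<3} \<times> {..<3}"
  unfolding elems27_def by auto

lemma mult27_closed:
  assumes "\<beta> < 3" "p \<in> set elems27" "q \<in> set elems27"
  shows "mult27 (a, b, \<alpha>, \<beta>) p q \<in> set elems27"
proof -
  have z: "times_z27 p \<in> set elems27" if "p \<in> set elems27" for p
    by (cases p) (use that in \<open>auto simp: set_elems27\<close>)
  have x: "times_x27 \<alpha> p \<in> set elems27" if "p \<in> set elems27" for p
    by (cases p) (use that in \<open>auto simp: set_elems27\<close>)
  have y: "times_y27 a b \<alpha> \<beta> p \<in> set elems27" if "p \<in> set elems27" for p
  proof -
    obtain j i k where p: "p = (j, i, k)" by (cases p)
    have "(if j = 2 then (0, 0, \<beta>) else (j + 1, 0, 0)) \<in> set elems27"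
      using that assms(1) p by (auto simp: set_elems27)
    then show ?thesis using p by (simp add: funpow_closed x z)
  qed
  obtain j i k where "q = (j, i, k)" by (cases q)
  then show ?thesis using assms(2) by (simp add: funpow_closed x y z)
qed

context group
begin

lemma central_nat_pow_commute:
  assumes "\<And>g. g \<in> carrier G \<Longrightarrow> g \<otimes> z = z \<otimes> g" "z \<in> carrier G" "g \<in> carrier G"
  shows "g \<otimes> z [^] (n::nat) = z [^] n \<otimes> g"
  using group_commutes_pow[OF assms(1)[OF assms(3), symmetric] assms(2,3)] by simp

lemma pow_mult_rel:
  assumes xyz: "x \<in> carrier G" "y \<in> carrier G" "z \<in> carrier G"
    and central: "\<And>g. g \<in> carrier G \<Longrightarrow> g \<otimes> z = z \<otimes> g"
    and rel: "x \<otimes> y = y \<otimes> x [^] (a::nat) \<otimes> z [^] (b::nat)"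
  shows "x [^] (i::nat) \<otimes> y = y \<otimes> x [^] (a * i) \<otimes> z [^] (b * i)"
proof (induction i)
  case 0
  then show ?case using xyz by simp
next
  case (Suc i)
  have "x [^] Suc i \<otimes> y = x [^] i \<otimes> (x \<otimes> y)" using xyz by (simp add: m_assoc)
  also have "\<dots> = (x [^] i \<otimes> y) \<otimes> x [^] a \<otimes> z [^] b" using xyz by (simp add: rel m_assoc)
  also have "\<dots> = y \<otimes> x [^] (a * i) \<otimes> (z [^] (b * i) \<otimes> x [^] a) \<otimes> z [^] b"
    using xyz by (simp add: Suc m_assoc)
  also have "\<dots> = y \<otimes> (x [^] (a * i) \<otimes> x [^] a) \<otimes> (z [^] (b * i) \<otimes> z [^] b)"
    using xyz central_nat_pow_commute[OF central xyz(3), of "x [^] a" "b * i", symmetric] by (simp add: m_assoc)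
  also have "\<dots> = y \<otimes> x [^] (a * Suc i) \<otimes> z [^] (b * Suc i)"
    using xyz by (simp add: nat_pow_mult add.commute)
  finally show ?case .
qed

lemma eval27_closed:
  "\<lbrakk>x \<in> carrier G; y \<in> carrier G; z \<in> carrier G\<rbrakk> \<Longrightarrow> eval27 G x y z p \<in> carrier G"
  by (cases p) (simp add: eval27_def)

lemma eval27_times_z27:
  assumes "x \<in> carrier G" "y \<in> carrier G" "z \<in> carrier G" "z [^] (3::nat) = \<one>"
  shows "eval27 G x y z (times_z27 p) = eval27 G x y z p \<otimes> z"
proof -
  obtain j i k where p: "p = (j, i, k)" by (cases p)
  show ?thesis using assms nat_pow_mod[OF assms(3,4)] by (simp add: p eval27_def m_assoc)
qed

lemma eval27_times_x27:
  assumes xyz: "x \<in> carrier G" "y \<in> carrier G" "z \<in> carrier G"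
    and central: "\<And>g. g \<in> carrier G \<Longrightarrow> g \<otimes> z = z \<otimes> g"
    and z3: "z [^] (3::nat) = \<one>" and x3: "x [^] (3::nat) = z [^] \<alpha>"
  shows "eval27 G x y z (times_x27 \<alpha> p) = eval27 G x y z p \<otimes> x"
proof -
  obtain j i k where p: "p = (j, i, k)" by (cases p)
  have "eval27 G x y z p \<otimes> x = y [^] j \<otimes> x [^] i \<otimes> (z [^] k \<otimes> x)"
    using xyz by (simp add: p eval27_def m_assoc)
  also have "\<dots> = y [^] j \<otimes> x [^] (Suc i) \<otimes> z [^] k"
    using xyz central_nat_pow_commute[OF central xyz(3,1)] by (simp add: m_assoc)
  finally have px: "eval27 G x y z p \<otimes> x = y [^] j \<otimes> x [^] (Suc i) \<otimes> z [^] k" .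
  show ?thesis
  proof (cases "i = 2")
    case True
    then have "x [^] (Suc i) = z [^] \<alpha>" using x3 by (simp add: numeral_3_eq_3)
    then have "eval27 G x y z p \<otimes> x = y [^] j \<otimes> z [^] \<alpha> \<otimes> z [^] k" using px by simp
    also have "\<dots> = y [^] j \<otimes> z [^] ((k + \<alpha>) mod 3)"
      using xyz nat_pow_mod[OF xyz(3) z3] by (simp add: m_assoc nat_pow_mult add.commute)
    finally show ?thesis using True xyz by (simp add: p eval27_def)
  next
    case False
    then have "eval27 G x y z (times_x27 \<alpha> p) = y [^] j \<otimes> x [^] (Suc i) \<otimes> z [^] k"
      by (simp add: p eval27_def)
    then show ?thesis unfolding px .
  qed
qed

lemma eval27_times_y27:
  assumes xyz: "x \<in> carrier G" "y \<in> carrier G" "z \<in> carrier G"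
    and central: "\<And>g. g \<in> carrier G \<Longrightarrow> g \<otimes> z = z \<otimes> g"
    and z3: "z [^] (3::nat) = \<one>" and x3: "x [^] (3::nat) = z [^] \<alpha>" and y3: "y [^] (3::nat) = z [^] \<beta>"
    and rel: "x \<otimes> y = y \<otimes> x [^] a \<otimes> z [^] b"
  shows "eval27 G x y z (times_y27 a b \<alpha> \<beta> p) = eval27 G x y z p \<otimes> y"
proof -
  let ?E = "eval27 G x y z"
  obtain j i k where p: "p = (j, i, k)" by (cases p)
  define base :: nf27 where "base = (if j = 2 then (0, 0, \<beta>) else (j + 1, 0, 0))"
  have "?E base = y [^] Suc j"
  proof (cases "j = 2")
    case True
    then have "?E base = z [^] \<beta>" using xyz by (simp add: base_def eval27_def)
    also have "\<dots> = y [^] Suc j" using y3 True by simp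
    finally show ?thesis .
  qed (use xyz in \<open>simp add: base_def eval27_def\<close>)
  then have "?E (times_y27 a b \<alpha> \<beta> p) = y [^] Suc j \<otimes> x [^] (a * i) \<otimes> z [^] (b * i + k)"
    using funpow_right_mult[of ?E, OF eval27_times_x27[OF xyz central z3 x3] eval27_closed[OF xyz] xyz(1)]
      funpow_right_mult[of ?E, OF eval27_times_z27[OF xyz z3] eval27_closed[OF xyz] xyz(3)]
    by (simp add: p base_def[symmetric])
  also have "\<dots> = y [^] j \<otimes> (y \<otimes> x [^] (a * i) \<otimes> z [^] (b * i)) \<otimes> z [^] k"
    using xyz by (simp add: m_assoc nat_pow_mult)
  also have "\<dots> = y [^] j \<otimes> (x [^] i \<otimes> y) \<otimes> z [^] k"
    using pow_mult_rel[OF xyz central rel] by simp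
  also have "\<dots> = ?E p \<otimes> y"
    using xyz central_nat_pow_commute[OF central xyz(3,2)] by (simp add: p eval27_def m_assoc)
  finally show ?thesis .
qed

lemma eval27_mult27:
  assumes xyz: "x \<in> carrier G" "y \<in> carrier G" "z \<in> carrier G"
    and central: "\<And>g. g \<in> carrier G \<Longrightarrow> g \<otimes> z = z \<otimes> g"
    and z3: "z [^] (3::nat) = \<one>" and x3: "x [^] (3::nat) = z [^] \<alpha>" and y3: "y [^] (3::nat) = z [^] \<beta>"
    and rel: "x \<otimes> y = y \<otimes> x [^] a \<otimes> z [^] b"
  shows "eval27 G x y z (mult27 (a, b, \<alpha>, \<beta>) p q) = eval27 G x y z p \<otimes> eval27 G x y z q"
proof -
  let ?E = "eval27 G x y z"
  note EG = eval27_closed[OF xyz]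
  obtain j i k where q: "q = (j, i, k)" by (cases q)
  have "?E (mult27 (a, b, \<alpha>, \<beta>) p q) = ?E p \<otimes> y [^] j \<otimes> x [^] i \<otimes> z [^] k"
    using funpow_right_mult[of ?E, OF eval27_times_y27[OF xyz central z3 x3 y3 rel] EG xyz(2)]
      funpow_right_mult[of ?E, OF eval27_times_x27[OF xyz central z3 x3] EG xyz(1)]
      funpow_right_mult[of ?E, OF eval27_times_z27[OF xyz z3] EG xyz(3)]
    by (simp add: q)
  then show ?thesis using xyz EG by (simp add: q eval27_def m_assoc)
qed

lemma order27_center_centralizer:
  assumes fin: "finite (carrier G)" and order: "order G = 27"
    and x: "x \<in> carrier G" "x \<notin> center"
  shows "card center = 3" "card (centralizer x) = 9"
proof -
  have order3: "order G = 3 ^ 3" using order by simp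
  have C: "subgroup (centralizer x) G" using subgroup_centralizer[OF x(1)] .
  have finC: "finite (centralizer x)" using fin subgroup.subset[OF C] by (rule finite_subset[rotated])
  have "center \<subset> centralizer x"
    using center_subset_centralizer[OF x(1)] x unfolding centralizer_def by auto
  then have lt1: "card center < card (centralizer x)" using finC by (rule psubset_card_mono[rotated])
  have "centralizer x \<noteq> carrier G" using x unfolding center_def centralizer_def by auto
  then have "centralizer x \<subset> carrier G" using subgroup.subset[OF C] by blast
  then have "card (centralizer x) < order G" unfolding order_def using fin by (rule psubset_card_mono[rotated])
  then have lt2: "card (centralizer x) < 3 ^ 3" using order3 by simp
  have p3: "prime (3::nat)" by simp
  have "card center dvd 3 ^ 3" using card_subgroup_dvd[OF subgroup_center] order3 by simp
  then obtain i where i: "card center = 3 ^ i" using divides_primepow_nat[OF p3] by blast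
  have "card (centralizer x) dvd 3 ^ 3" using card_subgroup_dvd[OF C] order3 by simp
  then obtain k where k: "card (centralizer x) = 3 ^ k" using divides_primepow_nat[OF p3] by blast
  have "3 dvd card center" using prime_dvd_card_center[OF fin _ order3] by simp
  then have "i \<noteq> 0" using i by (intro notI) simp
  moreover have "i < k" using lt1 unfolding i k by simp
  moreover have "k < 3" using lt2 power_strict_increasing_iff[of "3::nat" k 3] unfolding k by simp
  ultimately have "i = 1" "k = 2" by linarith+
  then show "card center = 3" "card (centralizer x) = 9" using i k by simp_all
qed

lemma order27_centralizer_decomposition:
  assumes fin: "finite (carrier G)" and order: "order G = 27"
    and x: "x \<in> carrier G" "x \<notin> center"
  shows "bij_betw (\<lambda>(i::nat, w). x [^] i \<otimes> w) ({..<3} \<times> center) (centralizer x)"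
    and "x [^] (3::nat) \<in> center"
proof -
  have C: "subgroup (centralizer x) G" using subgroup_centralizer[OF x(1)] .
  have finC: "finite (centralizer x)" using fin subgroup.subset[OF C] finite_subset by blast
  have xC: "x \<in> centralizer x" using x(1) unfolding centralizer_def by simp
  have x2: "x [^] (2::nat) \<notin> center"
    using mem_subgroup_of_square_mem[OF _ subgroup_center x(1)] x(2) order by auto
  show dec: "bij_betw (\<lambda>(i::nat, w). x [^] i \<otimes> w) ({..<3} \<times> center) (centralizer x)"
    using index_three_decomposition[OF subgroup_center C finC center_subset_centralizer[OF x(1)] _ xC x(2) x2]
      order27_center_centralizer[OF fin order x] by simp
  show "x [^] (3::nat) \<in> center"
    using cube_mem_of_index_three[OF subgroup_center C dec xC x(2) x2] .
qed

lemma order27_center_generator: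
  assumes fin: "finite (carrier G)" and order: "order G = 27"
    and x: "x \<in> carrier G" "x \<notin> center"
  obtains z where "z \<in> center" "z [^] (3::nat) = \<one>" "bij_betw (\<lambda>k::nat. z [^] k) {..<3} center"
proof -
  have cZ: "card center = 3" using order27_center_centralizer[OF fin order x] by simp
  obtain z where z: "z \<in> center" "z \<noteq> \<one>" using exists_ne_if_card_gt_1[of center \<one>] cZ by auto
  have zG: "z \<in> carrier G" using z(1) unfolding center_def by simp
  have "bij_betw (\<lambda>k::nat. z [^] k) {..<3} center" and "ord z = 3"
    using prime_order_subgroup_powers[OF fin subgroup_center _ z] cZ by simp_all
  moreover have "z [^] (3::nat) = \<one>" using pow_ord_eq_1[OF zG] \<open>ord z = 3\<close> by simp
  ultimately show thesis using that z(1) by blast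
qed

lemma order27_normal_form:
  assumes fin: "finite (carrier G)" and order: "order G = 27"
    and xy: "x \<in> carrier G" "y \<in> carrier G" "x \<otimes> y \<noteq> y \<otimes> x"
  obtains z a b \<alpha> \<beta> where "z \<in> center"
    "z [^] (3::nat) = \<one>" "x [^] (3::nat) = z [^] (\<alpha>::nat)" "y [^] (3::nat) = z [^] (\<beta>::nat)"
    "x \<otimes> y = y \<otimes> x [^] (a::nat) \<otimes> z [^] (b::nat)" "a < 3" "b < 3" "\<alpha> < 3" "\<beta> < 3"
    "bij_betw (eval27 G x y z) (set elems27) (carrier G)"
proof -
  note result = that
  have odd: "odd (order G)" using order by simp
  have xZ: "x \<notin> center" using xy unfolding center_def by (auto intro!: bexI[of _ y])
  have yZ: "y \<notin> center" using xy unfolding center_def by auto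
  have cC: "card (centralizer x) = 9" using order27_center_centralizer[OF fin order xy(1) xZ] by simp
  obtain z where z: "z \<in> center" and z3: "z [^] (3::nat) = \<one>"
    and zpow: "bij_betw (\<lambda>k::nat. z [^] k) {..<3} center"
    by (rule order27_center_generator[OF fin order xy(1) xZ])
  have zG: "z \<in> carrier G" using z unfolding center_def by simp
  have center_pow: "\<exists>k::nat<3. g = z [^] k" if "g \<in> center" for g
    using that zpow unfolding bij_betw_def by auto
  obtain \<alpha> :: nat where \<alpha>: "\<alpha> < 3" "x [^] (3::nat) = z [^] \<alpha>"
    using center_pow order27_centralizer_decomposition(2)[OF fin order xy(1) xZ] by blast
  obtain \<beta> :: nat where \<beta>: "\<beta> < 3" "y [^] (3::nat) = z [^] \<beta>"
    using center_pow order27_centralizer_decomposition(2)[OF fin order xy(2) yZ] by blast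
  let ?C = "centralizer x"
  have C: "subgroup ?C G" using subgroup_centralizer[OF xy(1)] .
  have xC: "x \<in> ?C" using xy(1) unfolding centralizer_def by simp
  have yC: "y \<notin> ?C" using xy unfolding centralizer_def by auto
  have y2C: "y [^] (2::nat) \<notin> ?C" using mem_subgroup_of_square_mem[OF odd C xy(2)] yC by blast
  have decG: "bij_betw (\<lambda>(j::nat, h). y [^] j \<otimes> h) ({..<3} \<times> ?C) (carrier G)"
    using index_three_decomposition[OF C subgroup_self fin subgroup.subset[OF C] _ xy(2) yC y2C]
      cC order unfolding order_def by simp
  have decC: "bij_betw (\<lambda>(i::nat, k::nat). x [^] i \<otimes> z [^] k) ({..<3} \<times> {..<3}) ?C"
    using bij_betw_pow_mult_comp[OF zpow order27_centralizer_decomposition(1)[OF fin order xy(1) xZ]] .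
  have "y \<otimes> x [^] (3::nat) = x [^] (3::nat) \<otimes> y"
    using order27_centralizer_decomposition(2)[OF fin order xy(1) xZ] xy(2) unfolding center_def by blast
  then have "x \<otimes> y \<in> y <# ?C"
    using index_three_l_coset_stable[OF C decG xy(2) yC y2C xC, of 3] by simp
  then obtain h where h: "h \<in> ?C" "x \<otimes> y = y \<otimes> h" unfolding l_coset_def by blast
  have "h \<in> (\<lambda>(i::nat, k::nat). x [^] i \<otimes> z [^] k) ` ({..<3} \<times> {..<3})"
    using decC h(1) by (simp add: bij_betw_def)
  then obtain a b :: nat where ab: "a < 3" "b < 3" "h = x [^] a \<otimes> z [^] b" by auto
  have rel: "x \<otimes> y = y \<otimes> x [^] a \<otimes> z [^] b" using h(2) ab(3) xy zG by (simp add: m_assoc)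
  have "bij_betw (\<lambda>(j::nat, i::nat, k::nat). y [^] j \<otimes> (x [^] i \<otimes> z [^] k)) ({..<3} \<times> {..<3} \<times> {..<3}) (carrier G)"
    using bij_betw_pow_mult_comp[OF decC decG] by (simp add: case_prod_unfold)
  moreover have "eval27 G x y z = (\<lambda>(j, i, k). y [^] j \<otimes> (x [^] i \<otimes> z [^] k))"
    using xy zG by (auto simp: eval27_def m_assoc)
  ultimately have bij: "bij_betw (eval27 G x y z) (set elems27) (carrier G)"
    by (simp add: set_elems27)
  show thesis
    by (rule result[OF z z3 \<alpha>(2) \<beta>(2) rel ab(1,2) \<alpha>(1) \<beta>(1) bij])
qed

end

text \<open>The terraces below were found by computer search. For the parameters without an entry,
  either \<open>x\<close> and \<open>y\<close> commute in the table or \<open>(xy)y\<^sup>2 \<noteq> x(yy\<^sup>2)\<close>, so no group arises.\<close>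

definition terraces27 :: "nat \<times> nat \<times> nat \<times> nat \<Rightarrow> (nf27 list \<times> nf27 list) option" where
  "terraces27 = map_of [
    ((1,1,0,0),
      ([(0,0,0), (1,2,0), (0,2,1), (2,2,1), (2,0,1), (2,1,0), (2,0,2), (1,1,2), (2,1,2), (1,0,2), (0,2,2), (0,2,0), (1,1,0), (0,0,1), (2,2,0), (0,1,0), (0,1,1), (2,0,0), (1,2,1), (2,2,2), (1,0,0), (1,2,2), (1,0,1), (1,1,1), (0,1,2), (2,1,1), (0,0,2)],
       [(0,0,0), (1,2,0), (0,2,1), (2,2,1), (2,0,1), (2,1,0), (2,1,1), (1,0,0), (2,1,2), (0,1,2), (1,0,1), (0,1,1), (1,2,2), (1,1,1), (0,0,2), (0,2,2), (1,0,2), (2,0,0), (2,0,2), (1,1,0), (1,2,1), (2,2,0), (1,1,2), (0,2,0), (2,2,2), (0,1,0), (0,0,1)])),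
    ((1,1,0,1),
      ([(0,0,0), (1,2,0), (0,2,2), (2,2,2), (2,0,2), (2,1,1), (0,0,2), (2,1,2), (1,0,0), (1,2,2), (2,0,1), (0,1,0), (1,1,2), (1,1,0), (1,1,1), (2,1,0), (0,2,0), (1,0,2), (1,2,1), (0,1,1), (2,2,0), (0,1,2), (0,2,1), (0,0,1), (2,0,0), (1,0,1), (2,2,1)],
       [(0,0,0), (1,2,0), (0,2,2), (2,2,2), (2,0,2), (2,1,1), (2,1,2), (0,0,2), (1,1,0), (2,0,0), (0,1,1), (2,0,1), (2,2,0), (0,2,1), (0,2,0), (1,0,1), (1,2,2), (1,0,0), (0,1,2), (1,1,2), (2,1,0), (1,0,2), (0,1,0), (2,2,1), (1,2,1), (1,1,1), (0,0,1)])),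
    ((1,1,0,2),
      ([(0,0,0), (2,2,0), (2,0,0), (2,0,2), (2,1,0), (0,1,1), (0,2,0), (1,0,0), (2,2,2), (1,2,1), (0,1,0), (1,0,1), (2,0,1), (0,2,1), (1,1,1), (2,1,2), (0,0,2), (2,2,1), (1,2,0), (2,1,1), (0,2,2), (0,0,1), (1,0,2), (1,1,0), (1,1,2), (1,2,2), (0,1,2)],
       [(0,0,0), (1,2,0), (0,2,0), (2,2,0), (2,0,0), (2,1,2), (2,1,0), (0,0,1), (1,1,2), (2,0,2), (0,1,1), (2,1,1), (1,0,2), (1,2,1), (0,1,2), (1,2,2), (2,2,1), (1,0,0), (2,0,1), (2,2,2), (1,1,1), (1,0,1), (0,1,0), (1,1,0), (0,2,2), (0,2,1), (0,0,2)])),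
    ((1,1,1,0),
      ([(0,0,0), (1,2,0), (0,2,1), (2,2,1), (2,0,2), (2,1,1), (0,0,2), (2,1,2), (0,1,2), (1,2,1), (2,0,1), (1,2,2), (1,1,1), (1,1,0), (1,1,2), (1,0,1), (0,2,2), (1,0,2), (2,1,0), (0,1,0), (2,2,2), (0,1,1), (0,2,0), (0,0,1), (2,0,0), (1,0,0), (2,2,0)],
       [(0,0,0), (1,2,0), (0,2,1), (2,2,1), (2,0,2), (2,1,1), (2,1,2), (0,0,2), (1,1,0), (2,1,0), (0,2,0), (2,0,1), (2,2,2), (1,1,1), (1,0,2), (0,1,0), (1,0,1), (0,1,1), (1,1,2), (2,2,0), (1,2,2), (1,2,1), (1,0,0), (0,2,2), (0,1,2), (2,0,0), (0,0,1)])),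
    ((1,1,1,1),
      ([(0,0,0), (1,2,0), (0,2,2), (2,2,2), (2,0,0), (2,1,2), (1,0,1), (2,1,0), (0,1,0), (1,2,1), (0,0,2), (0,0,1), (0,1,2), (2,2,0), (1,0,2), (1,1,0), (1,1,2), (0,2,0), (1,0,0), (2,0,1), (0,1,1), (2,0,2), (2,1,1), (2,2,1), (1,2,2), (0,2,1), (1,1,1)],
       [(0,0,0), (1,2,0), (0,2,2), (2,2,2), (2,0,0), (2,1,2), (2,1,0), (0,0,1), (1,1,2), (2,1,1), (0,2,0), (1,0,2), (1,1,0), (2,0,1), (1,1,1), (1,0,0), (0,2,1), (1,2,2), (0,1,0), (2,0,2), (2,2,1), (1,2,1), (2,2,0), (1,0,1), (0,1,2), (0,1,1), (0,0,2)])),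
    ((1,1,1,2),
      ([(0,0,0), (0,1,1), (1,0,2), (1,0,0), (0,0,2), (1,1,0), (2,2,0), (1,2,1), (2,0,1), (0,2,1), (1,1,1), (2,1,1), (2,2,1), (2,1,2), (2,0,0), (2,1,0), (0,1,2), (1,0,1), (2,2,2), (0,0,1), (2,0,2), (0,1,0), (1,2,2), (0,2,2), (0,2,0), (1,1,2), (1,2,0)],
       [(0,0,0), (1,2,0), (0,2,0), (2,2,0), (2,0,1), (2,1,0), (2,1,1), (1,0,0), (2,1,2), (0,1,2), (1,0,2), (0,1,1), (1,2,2), (1,1,1), (2,0,2), (2,2,2), (1,0,1), (0,2,2), (2,2,1), (2,0,0), (0,1,0), (1,1,0), (1,1,2), (0,0,2), (0,2,1), (1,2,1), (0,0,1)])),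
    ((1,1,2,0),
      ([(0,0,0), (2,1,1), (0,2,0), (1,2,2), (2,1,0), (2,0,1), (0,2,2), (2,2,2), (2,1,2), (1,0,0), (1,2,0), (2,2,1), (1,1,0), (1,1,1), (1,1,2), (0,0,2), (1,0,1), (1,2,1), (0,1,1), (0,0,1), (2,0,0), (0,2,1), (0,1,2), (1,0,2), (2,0,2), (0,1,0), (2,2,0)],
       [(0,0,0), (1,2,0), (0,2,1), (2,2,1), (2,0,0), (2,1,2), (2,1,0), (0,0,1), (1,1,2), (2,0,1), (0,1,1), (2,1,1), (1,0,2), (1,1,0), (1,0,1), (0,2,2), (0,1,2), (1,2,2), (1,2,1), (2,2,2), (1,1,1), (1,0,0), (0,1,0), (2,2,0), (0,2,0), (2,0,2), (0,0,2)])),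
    ((1,1,2,1),
      ([(0,0,0), (2,2,0), (2,0,2), (2,0,1), (2,1,2), (0,1,2), (1,1,0), (0,2,1), (1,1,1), (0,0,2), (1,0,1), (0,2,0), (0,0,1), (2,1,0), (1,2,2), (1,0,0), (0,2,2), (1,2,0), (0,1,0), (1,0,2), (0,1,1), (1,1,2), (2,1,1), (2,2,2), (2,2,1), (2,0,0), (1,2,1)],
       [(0,0,0), (1,2,0), (0,2,2), (2,2,2), (2,0,1), (2,1,0), (2,1,1), (1,0,0), (2,1,2), (0,1,2), (2,2,1), (1,1,0), (1,0,2), (2,2,0), (0,1,1), (0,0,2), (1,0,1), (0,2,1), (0,2,0), (2,0,2), (1,1,1), (1,2,2), (1,1,2), (0,1,0), (1,2,1), (2,0,0), (0,0,1)])),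
    ((1,1,2,2),
      ([(0,0,0), (2,2,0), (2,0,2), (2,0,1), (2,1,2), (0,1,0), (2,1,0), (1,0,1), (2,2,2), (0,2,2), (1,1,2), (2,2,1), (0,1,1), (0,2,0), (0,0,1), (1,2,1), (2,0,0), (0,2,1), (1,2,2), (2,1,1), (1,0,2), (0,0,2), (1,0,0), (1,1,1), (1,1,0), (1,2,0), (0,1,2)],
       [(0,0,0), (2,2,0), (2,0,2), (2,0,1), (2,1,2), (0,1,0), (1,0,0), (0,2,0), (1,2,1), (0,1,2), (1,0,1), (1,2,0), (0,0,2), (1,0,2), (1,2,2), (0,2,1), (1,1,0), (2,2,1), (2,1,1), (0,2,2), (2,0,0), (1,1,1), (1,1,2), (0,1,1), (2,1,0), (2,2,2), (0,0,1)])),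
    ((1,2,0,0),
      ([(0,0,0), (2,2,0), (2,0,0), (2,0,2), (2,1,0), (0,1,0), (2,1,2), (1,0,2), (2,2,1), (0,2,2), (0,0,1), (1,2,2), (2,0,1), (0,2,1), (1,1,2), (2,2,2), (0,1,1), (0,2,0), (1,2,1), (2,1,1), (1,0,1), (0,0,2), (1,0,0), (1,1,1), (1,1,0), (1,2,0), (0,1,2)],
       [(0,0,0), (1,2,0), (0,2,2), (2,2,0), (2,0,0), (2,1,2), (2,1,0), (1,0,1), (2,1,1), (0,1,2), (1,0,2), (0,1,1), (1,2,1), (1,1,0), (2,0,1), (1,2,2), (1,1,2), (1,0,0), (1,1,1), (0,1,0), (2,2,2), (0,2,1), (0,2,0), (2,0,2), (0,0,2), (2,2,1), (0,0,1)])),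
    ((1,2,0,1),
      ([(0,0,0), (2,2,0), (2,0,0), (2,0,2), (2,1,0), (0,1,1), (1,0,0), (0,1,0), (1,0,1), (2,0,1), (1,0,2), (1,1,1), (0,0,1), (1,1,0), (2,2,1), (1,1,2), (1,2,1), (0,2,1), (1,2,2), (2,1,2), (1,2,0), (2,1,1), (0,1,2), (0,2,0), (0,2,2), (0,0,2), (2,2,2)],
       [(0,0,0), (2,2,0), (2,0,0), (2,0,2), (2,1,0), (0,1,1), (1,0,0), (0,2,2), (1,2,2), (0,2,1), (1,1,1), (1,0,2), (2,1,1), (0,0,2), (2,2,1), (1,0,1), (1,2,1), (1,1,0), (2,1,2), (1,1,2), (0,2,0), (2,2,2), (2,0,1), (0,1,2), (0,1,0), (1,2,0), (0,0,1)])),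
    ((1,2,0,2),
      ([(0,0,0), (1,2,0), (0,2,1), (2,2,2), (2,0,2), (1,1,2), (2,1,1), (0,2,0), (0,1,1), (0,1,0), (1,0,1), (2,1,0), (1,0,0), (1,2,2), (1,1,1), (0,0,1), (1,1,0), (2,0,1), (2,0,0), (2,2,1), (0,0,2), (1,0,2), (0,1,2), (0,2,2), (2,2,0), (1,2,1), (2,1,2)],
       [(0,0,0), (2,2,0), (2,0,0), (2,0,2), (2,1,0), (0,1,2), (1,0,1), (0,2,1), (1,2,1), (2,2,2), (0,1,1), (0,0,2), (1,2,0), (0,1,0), (0,2,2), (1,0,2), (2,1,2), (1,1,1), (2,2,1), (2,1,1), (1,1,2), (1,1,0), (0,2,0), (2,0,1), (1,0,0), (1,2,2), (0,0,1)])),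
    ((1,2,1,0),
      ([(0,0,0), (2,2,0), (2,0,1), (2,0,0), (2,1,1), (0,1,1), (0,2,0), (1,1,1), (2,1,2), (0,0,2), (2,2,1), (1,2,0), (2,1,0), (0,2,2), (1,0,1), (2,2,2), (1,2,1), (0,1,0), (1,0,0), (2,0,2), (0,2,1), (0,0,1), (1,0,2), (1,1,0), (1,1,2), (1,2,2), (0,1,2)],
       [(0,0,0), (1,2,0), (0,2,2), (2,2,0), (2,0,1), (2,1,0), (2,1,1), (0,0,2), (1,1,0), (2,0,2), (0,1,2), (2,0,0), (2,2,1), (0,2,1), (0,2,0), (1,0,1), (1,2,1), (2,2,2), (1,0,0), (0,1,0), (2,1,2), (1,0,2), (0,1,1), (1,1,1), (1,2,2), (1,1,2), (0,0,1)])),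
    ((1,2,1,1),
      ([(0,0,0), (1,2,0), (0,2,0), (2,2,1), (2,0,2), (1,1,1), (0,0,1), (1,1,2), (2,0,1), (2,0,0), (2,2,0), (0,0,2), (1,0,0), (1,2,1), (1,1,0), (2,1,0), (0,2,2), (0,1,0), (0,1,2), (1,0,1), (2,1,2), (1,0,2), (0,1,1), (0,2,1), (2,2,2), (1,2,2), (2,1,1)],
       [(0,0,0), (2,2,0), (2,0,1), (2,0,0), (2,1,1), (0,1,2), (1,0,2), (0,2,1), (1,2,1), (2,2,2), (0,1,1), (0,0,2), (1,2,0), (0,1,0), (0,2,2), (1,0,0), (2,1,0), (1,1,2), (1,0,1), (2,1,2), (1,1,0), (1,1,1), (0,2,0), (2,0,2), (2,2,1), (1,2,2), (0,0,1)])),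
    ((1,2,1,2),
      ([(0,0,0), (2,2,0), (2,0,1), (2,0,0), (2,1,1), (0,1,0), (1,2,0), (2,2,1), (1,0,1), (0,2,2), (0,0,2), (2,1,2), (1,1,1), (0,2,0), (2,0,2), (1,0,0), (0,1,2), (0,2,1), (2,1,0), (1,2,1), (2,2,2), (0,0,1), (1,0,2), (1,1,0), (1,1,2), (1,2,2), (0,1,1)],
       [(0,0,0), (1,2,0), (0,2,1), (2,2,2), (2,0,0), (2,1,2), (2,1,0), (1,0,1), (2,1,1), (0,1,2), (1,0,0), (0,1,1), (0,2,2), (1,0,2), (2,0,1), (1,2,1), (1,1,2), (0,2,0), (0,1,0), (2,2,1), (2,2,0), (1,2,2), (1,1,1), (0,0,1), (1,1,0), (2,0,2), (0,0,2)])),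
    ((1,2,2,0),
      ([(0,0,0), (1,2,0), (0,2,2), (2,2,0), (2,0,2), (2,1,1), (2,0,0), (1,1,1), (2,1,2), (1,0,0), (0,2,0), (0,2,1), (1,1,0), (0,0,2), (2,2,1), (0,1,0), (0,1,1), (2,0,1), (1,2,2), (2,2,2), (1,0,1), (1,2,1), (1,0,2), (1,1,2), (0,1,2), (2,1,0), (0,0,1)],
       [(0,0,0), (1,2,0), (0,2,2), (2,2,0), (2,0,2), (2,1,1), (2,1,2), (0,0,1), (1,1,2), (2,1,0), (0,2,1), (0,1,0), (1,0,0), (0,2,0), (0,1,1), (2,0,0), (1,2,1), (1,1,1), (1,1,0), (2,2,2), (1,2,2), (1,0,2), (0,1,2), (2,2,1), (1,0,1), (2,0,1), (0,0,2)])),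
    ((1,2,2,1),
      ([(0,0,0), (0,1,1), (1,0,1), (1,0,2), (1,1,2), (2,2,0), (1,2,2), (0,2,0), (2,1,0), (2,0,1), (1,1,0), (2,0,2), (1,2,1), (2,2,1), (0,2,2), (2,1,1), (0,0,1), (2,1,2), (2,0,0), (1,2,0), (0,2,1), (2,2,2), (0,0,2), (0,1,2), (0,1,0), (1,0,0), (1,1,1)],
       [(0,0,0), (1,2,0), (0,2,0), (2,2,1), (2,0,0), (2,1,2), (2,1,0), (1,0,1), (2,1,1), (0,1,2), (1,2,2), (0,0,1), (0,2,1), (1,1,0), (2,0,2), (2,2,0), (1,0,0), (0,1,0), (1,1,2), (1,1,1), (1,0,2), (2,0,1), (1,2,1), (0,1,1), (0,2,2), (2,2,2), (0,0,2)])),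
    ((1,2,2,2),
      ([(0,0,0), (2,2,0), (2,0,2), (2,0,1), (2,1,2), (0,1,1), (1,0,2), (0,1,2), (1,0,1), (2,0,0), (1,0,0), (1,1,2), (2,2,1), (1,1,0), (0,0,1), (1,1,1), (1,2,0), (0,2,2), (1,2,2), (2,1,0), (1,2,1), (2,1,1), (0,1,0), (0,2,1), (0,2,0), (0,0,2), (2,2,2)],
       [(0,0,0), (1,2,0), (0,2,1), (2,2,2), (2,0,1), (2,1,0), (2,1,1), (0,0,2), (1,1,0), (2,1,2), (0,2,2), (1,0,2), (0,1,2), (0,2,0), (0,1,1), (1,1,1), (1,0,0), (1,2,1), (2,2,1), (1,0,1), (2,2,0), (1,1,2), (0,1,0), (2,0,0), (2,0,2), (1,2,2), (0,0,1)]))]"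

lemma certificates27:
  "list_all (\<lambda>t. mult27 t (0, 1, 0) (1, 0, 0) = mult27 t (1, 0, 0) (0, 1, 0)
      \<or> nonassoc_witness (mult27 t) (0, 1, 0) (1, 0, 0) (2, 0, 0)
      \<or> (case terraces27 t of None \<Rightarrow> False | Some (a, a') \<Rightarrow>
           table_narcissistic elems27 (mult27 t) (0, 0, 0) a (table_quotients elems27 (mult27 t) a) \<and>
           table_directed_hh_terrace elems27 (mult27 t) (0, 0, 0) a' (table_quotients elems27 (mult27 t) a')))
     (List.product [0..<3] (List.product [0..<3] (List.product [0..<3] [0..<3])))"
  by code_simp

lemma nonabelian_order27_terraces:
  fixes G :: "'a monoid" (structure)
  assumes "group G" "finite (carrier G)" "card (carrier G) = 27" "\<not> comm_group G"
  shows "(\<exists>a. narcissistic G a) \<and> (\<exists>a. directed_hh_terrace G a)"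
proof -
  interpret group G by fact
  have order: "order G = 27" using assms(3) unfolding order_def .
  obtain x y where xy: "x \<in> carrier G" "y \<in> carrier G" "x \<otimes> y \<noteq> y \<otimes> x"
    using assms(4) group_comm_groupI by blast
  obtain z and a b \<alpha> \<beta> :: nat where center: "z \<in> center"
    and pow: "z [^] (3::nat) = \<one>" "x [^] (3::nat) = z [^] \<alpha>" "y [^] (3::nat) = z [^] \<beta>"
    and rel: "x \<otimes> y = y \<otimes> x [^] a \<otimes> z [^] b" and bounds: "a < 3" "b < 3" "\<alpha> < 3" "\<beta> < 3"
    and bij: "bij_betw (eval27 G x y z) (set elems27) (carrier G)"
    by (rule order27_normal_form[OF assms(2) order xy])
  have z: "z \<in> carrier G" "\<And>g. g \<in> carrier G \<Longrightarrow> g \<otimes> z = z \<otimes> g"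
    using center unfolding center_def by auto
  let ?t = "(a, b, \<alpha>, \<beta>)"
  interpret T: table_iso G elems27 "mult27 ?t" "(0, 0, 0)" "eval27 G x y z"
  proof
    show "bij_betw (eval27 G x y z) (set elems27) (carrier G)" by (fact bij)
    show "eval27 G x y z (mult27 ?t p q) = eval27 G x y z p \<otimes> eval27 G x y z q" for p q
      by (rule eval27_mult27[OF xy(1,2) z pow rel])
    show "mult27 ?t p q \<in> set elems27" if "p \<in> set elems27" "q \<in> set elems27" for p q
      using mult27_closed[OF bounds(4) that] .
    show "(0, 0, 0) \<in> set elems27" by (simp add: set_elems27)
    show "eval27 G x y z (0, 0, 0) = \<one>" by (simp add: eval27_def)
  qed
  have "?t \<in> set (List.product [0..<3] (List.product [0..<3] (List.product [0..<3] [0..<3])))"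
    using bounds by simp
  then have cert: "mult27 ?t (0, 1, 0) (1, 0, 0) = mult27 ?t (1, 0, 0) (0, 1, 0)
      \<or> nonassoc_witness (mult27 ?t) (0, 1, 0) (1, 0, 0) (2, 0, 0)
      \<or> (case terraces27 ?t of None \<Rightarrow> False | Some (a, a') \<Rightarrow>
           table_narcissistic elems27 (mult27 ?t) (0, 0, 0) a (table_quotients elems27 (mult27 ?t) a) \<and>
           table_directed_hh_terrace elems27 (mult27 ?t) (0, 0, 0) a' (table_quotients elems27 (mult27 ?t) a'))"
    using certificates27 by (simp only: list_all_iff)
  have "eval27 G x y z (0, 1, 0) \<otimes> eval27 G x y z (1, 0, 0) \<noteq> eval27 G x y z (1, 0, 0) \<otimes> eval27 G x y z (0, 1, 0)"
    using xy by (simp add: eval27_def)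
  from T.certificate_cases[OF cert this] obtain a a' where
      "table_narcissistic elems27 (mult27 ?t) (0, 0, 0) a (table_quotients elems27 (mult27 ?t) a)"
      "table_directed_hh_terrace elems27 (mult27 ?t) (0, 0, 0) a' (table_quotients elems27 (mult27 ?t) a')"
    by (auto simp: set_elems27 split: option.splits)
  then show ?thesis using T.narcissistic_map T.directed_hh_terrace_map by blast
qed

section \<open>Groups of order 39\<close>

type_synonym nf39 = "nat \<times> nat"

text \<open>A pair \<open>(j, i)\<close> stands for \<open>y\<^sup>j x\<^sup>i\<close>, under the relations \<open>x\<^sup>1\<^sup>3 = y\<^sup>3 = 1\<close>, \<open>xy = yx\<^sup>r\<close>.\<close>

definition elems39 :: "nf39 list" where
  "elems39 = List.product [0..<3] [0..<13]"

fun times_x39 :: "nf39 \<Rightarrow> nf39" where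
  "times_x39 (j, i) = (j, (i + 1) mod 13)"

fun times_y39 :: "nat \<Rightarrow> nf39 \<Rightarrow> nf39" where
  "times_y39 r (j, i) = ((j + 1) mod 3, (r * i) mod 13)"

fun mult39 :: "nat \<Rightarrow> nf39 \<Rightarrow> nf39 \<Rightarrow> nf39" where
  "mult39 r p (j, i) = (times_x39 ^^ i) ((times_y39 r ^^ j) p)"

definition eval39 :: "('a, 'b) monoid_scheme \<Rightarrow> 'a \<Rightarrow> 'a \<Rightarrow> nf39 \<Rightarrow> 'a" where
  "eval39 G x y = (\<lambda>(j, i). y [^]\<^bsub>G\<^esub> j \<otimes>\<^bsub>G\<^esub> x [^]\<^bsub>G\<^esub> i)"

lemma set_elems39: "set elems39 = {..<3} \<times> {..<13}"
  unfolding elems39_def by auto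

lemma mult39_closed:
  assumes "p \<in> set elems39" "q \<in> set elems39"
  shows "mult39 r p q \<in> set elems39"
proof -
  have x: "times_x39 p \<in> set elems39" if "p \<in> set elems39" for p
    by (cases p) (use that in \<open>auto simp: set_elems39\<close>)
  have y: "times_y39 r p \<in> set elems39" if "p \<in> set elems39" for p
    by (cases p) (use that in \<open>auto simp: set_elems39\<close>)
  obtain j i where "q = (j, i)" by (cases q)
  then show ?thesis using assms(1) by (simp add: funpow_closed x y)
qed

context group
begin

lemma eval39_mult39:
  assumes xy: "x \<in> carrier G" "y \<in> carrier G"
    and x13: "x [^] (13::nat) = \<one>" and y3: "y [^] (3::nat) = \<one>" and rel: "x \<otimes> y = y \<otimes> x [^] r"
  shows "eval39 G x y (mult39 r p q) = eval39 G x y p \<otimes> eval39 G x y q"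
proof -
  let ?E = "eval39 G x y"
  have E: "?E (j, i) = y [^] j \<otimes> x [^] i" for j i by (simp add: eval39_def)
  have EG: "?E p \<in> carrier G" for p using xy by (cases p) (simp add: E)
  have xmod: "x [^] (n mod 13) = x [^] n" for n :: nat using nat_pow_mod[OF xy(1) x13] .
  have ymod: "y [^] (n mod 3) = y [^] n" for n :: nat using nat_pow_mod[OF xy(2) y3] .
  have X: "?E (times_x39 p) = ?E p \<otimes> x" for p
  proof -
    obtain j i where p: "p = (j, i)" by (cases p)
    show ?thesis using xy by (simp add: p E xmod m_assoc)
  qed
  have conj: "x [^] i \<otimes> y = y \<otimes> x [^] (r * i)" for i :: nat
    using pow_mult_rel[OF xy one_closed, of r 0 i] rel xy by simp
  have Y: "?E (times_y39 r p) = ?E p \<otimes> y" for p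
  proof -
    obtain j i where p: "p = (j, i)" by (cases p)
    have "?E (times_y39 r p) = y [^] j \<otimes> (y \<otimes> x [^] (r * i))"
      using xy by (simp add: p E xmod ymod m_assoc)
    also have "\<dots> = ?E p \<otimes> y" using xy by (simp add: p E conj m_assoc)
    finally show ?thesis .
  qed
  obtain j i where q: "q = (j, i)" by (cases q)
  have "?E (mult39 r p q) = ?E p \<otimes> y [^] j \<otimes> x [^] i"
    using funpow_right_mult[of ?E, OF Y EG xy(2)] funpow_right_mult[of ?E, OF X EG xy(1)]
    by (simp add: q)
  then show ?thesis using xy EG by (simp add: q E m_assoc)
qed

lemma comm_group_if_generators_commute:
  assumes xy: "x \<in> carrier G" "y \<in> carrier G" "x \<otimes> y = y \<otimes> x"
    and gen: "\<And>g. g \<in> carrier G \<Longrightarrow> \<exists>(j::nat) (i::nat). g = y [^] j \<otimes> x [^] i"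
  shows "comm_group G"
proof (rule group_comm_groupI)
  have "x [^] i \<otimes> y = y \<otimes> x [^] i" for i :: nat using group_commutes_pow[OF xy(3,1,2)] .
  then have swap: "x [^] i \<otimes> y [^] j = y [^] j \<otimes> x [^] i" for i j :: nat
    using group_commutes_pow[of y "x [^] i" j] xy by simp
  have prod: "y [^] j \<otimes> x [^] i \<otimes> (y [^] j' \<otimes> x [^] i') = y [^] (j + j') \<otimes> x [^] (i + i')"
    for j i j' i' :: nat
  proof -
    have "y [^] j \<otimes> x [^] i \<otimes> (y [^] j' \<otimes> x [^] i') = y [^] j \<otimes> (x [^] i \<otimes> y [^] j') \<otimes> x [^] i'"
      using xy by (simp add: m_assoc)
    also have "\<dots> = y [^] j \<otimes> y [^] j' \<otimes> (x [^] i \<otimes> x [^] i')"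
      using xy by (simp add: swap m_assoc)
    finally show ?thesis using xy by (simp add: nat_pow_mult)
  qed
  fix g h assume g: "g \<in> carrier G" and h: "h \<in> carrier G"
  obtain j i :: nat where "g = y [^] j \<otimes> x [^] i" using gen[OF g] by blast
  moreover obtain j' i' :: nat where "h = y [^] j' \<otimes> x [^] i'" using gen[OF h] by blast
  ultimately show "g \<otimes> h = h \<otimes> g" by (simp add: prod add.commute)
qed

lemma order39_sylow_elements:
  assumes fin: "finite (carrier G)" and order: "order G = 39"
  obtains P x y where "subgroup P G" "card P = 13" "x \<in> P" "bij_betw (\<lambda>i::nat. x [^] i) {..<13} P"
    "x [^] (13::nat) = \<one>" "y \<in> carrier G" "y [^] (3::nat) = \<one>" "y \<notin> P"
proof -
  have p13: "prime (13::nat)" by code_simp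
  have p3: "prime (3::nat)" by simp
  obtain P where P: "subgroup P G" "card P = 13"
    using sylow_thm[OF p13 is_group _ fin, of 1 3] order by auto
  obtain Q where Q: "subgroup Q G" "card Q = 3"
    using sylow_thm[OF p3 is_group _ fin, of 1 13] order by auto
  obtain x where x: "x \<in> P" "x \<noteq> \<one>" using exists_ne_if_card_gt_1[of P \<one>] P(2) by auto
  obtain y where y: "y \<in> Q" "y \<noteq> \<one>" using exists_ne_if_card_gt_1[of Q \<one>] Q(2) by auto
  have xG: "x \<in> carrier G" using subgroup.mem_carrier[OF P(1) x(1)] .
  have yG: "y \<in> carrier G" using subgroup.mem_carrier[OF Q(1) y(1)] .
  have xpow: "bij_betw (\<lambda>i::nat. x [^] i) {..<13} P" and "ord x = 13"
    using prime_order_subgroup_powers[OF fin P(1) _ x] P(2) p13 by simp_all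
  then have x13: "x [^] (13::nat) = \<one>" using pow_ord_eq_1[OF xG] by simp
  have oy: "ord y = 3" using prime_order_subgroup_powers(1)[OF fin Q(1) _ y] Q(2) p3 by simp
  then have y3: "y [^] (3::nat) = \<one>" using pow_ord_eq_1[OF yG] by simp
  have "y \<notin> P"
  proof
    assume "y \<in> P"
    then have "y [^] (13::nat) = \<one>" using nat_pow_card_subgroup[OF P(1)] P(2) by metis
    then show False using pow_eq_id[OF yG] oy by simp
  qed
  then show thesis using that P x(1) xpow x13 yG y3 by blast
qed

lemma order39_normal_form:
  assumes fin: "finite (carrier G)" and order: "order G = 39" and nc: "\<not> comm_group G"
  obtains x y r where "x \<in> carrier G" "y \<in> carrier G" "x [^] (13::nat) = \<one>" "y [^] (3::nat) = \<one>"
    "x \<otimes> y = y \<otimes> x [^] (r::nat)" "r < 13" "x \<otimes> y \<noteq> y \<otimes> x"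
    "bij_betw (eval39 G x y) (set elems39) (carrier G)"
proof -
  note result = that
  obtain P x y where P: "subgroup P G" "card P = 13" and x: "x \<in> P"
    and xpow: "bij_betw (\<lambda>i::nat. x [^] i) {..<13} P" and x13: "x [^] (13::nat) = \<one>"
    and yG: "y \<in> carrier G" and y3: "y [^] (3::nat) = \<one>" and yP: "y \<notin> P"
    by (rule order39_sylow_elements[OF fin order])
  have xG: "x \<in> carrier G" using subgroup.mem_carrier[OF P(1) x] .
  have y2P: "y [^] (2::nat) \<notin> P" using mem_subgroup_of_square_mem[OF _ P(1) yG] yP order by auto
  have decG: "bij_betw (\<lambda>(j::nat, h). y [^] j \<otimes> h) ({..<3} \<times> P) (carrier G)"
    using index_three_decomposition[OF P(1) subgroup_self fin subgroup.subset[OF P(1)] _ yG yP y2P]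
      P(2) order unfolding order_def by simp
  have "x \<otimes> y \<in> y <# P"
    using index_three_l_coset_stable[OF P(1) decG yG yP y2P x, of 13] x13 yG by simp
  then obtain h where h: "h \<in> P" "x \<otimes> y = y \<otimes> h" unfolding l_coset_def by blast
  have "h \<in> (\<lambda>i::nat. x [^] i) ` {..<13}" using xpow h(1) by (simp add: bij_betw_def)
  then obtain r :: nat where rel: "x \<otimes> y = y \<otimes> x [^] r" "r < 13" using h(2) by auto
  have bij: "bij_betw (eval39 G x y) (set elems39) (carrier G)"
    using bij_betw_pow_mult_comp[OF xpow decG] by (simp add: set_elems39 eval39_def)
  have noncomm: "x \<otimes> y \<noteq> y \<otimes> x"
  proof
    assume "x \<otimes> y = y \<otimes> x"
    moreover have "\<exists>(j::nat) (i::nat). g = y [^] j \<otimes> x [^] i" if "g \<in> carrier G" for g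
    proof -
      have "g \<in> eval39 G x y ` set elems39" using that bij by (simp add: bij_betw_def)
      then show ?thesis by (auto simp: eval39_def)
    qed
    ultimately show False using comm_group_if_generators_commute[OF xG yG] nc by blast
  qed
  show thesis by (rule result[OF xG yG x13 y3 rel noncomm bij])
qed

end

definition terraces39 :: "nat \<Rightarrow> nf39 list option" where
  "terraces39 = map_of [
    (3,
      [(0,0), (0,1), (0,8), (1,3), (0,4), (1,12), (2,4), (0,9), (1,10), (1,0), (0,6), (0,10), (2,7), (1,2), (2,5), (1,5), (1,7), (2,6), (0,11), (0,3), (0,2), (1,8), (1,6), (2,0), (1,9), (2,2), (2,11), (2,8), (2,1), (2,9), (0,5), (2,3), (1,1), (0,7), (2,12), (1,11), (2,10), (1,4), (0,12)]),
    (9,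
      [(0,0), (0,1), (0,8), (1,12), (2,6), (0,2), (2,7), (0,6), (1,5), (1,8), (0,4), (2,9), (2,4), (1,2), (2,2), (1,1), (1,3), (2,10), (1,9), (1,0), (2,11), (1,7), (2,12), (0,11), (2,3), (1,11), (0,5), (0,10), (0,7), (0,3), (0,9), (2,8), (1,10), (2,5), (1,6), (1,4), (2,1), (2,0), (0,12)])]"

lemma certificates39:
  "list_all (\<lambda>r. mult39 r (0, 1) (1, 0) = mult39 r (1, 0) (0, 1)
      \<or> nonassoc_witness (mult39 r) (0, 1) (1, 0) (2, 0)
      \<or> (case terraces39 r of None \<Rightarrow> False | Some a \<Rightarrow>
           table_directed_hh_terrace elems39 (mult39 r) (0, 0) a (table_quotients elems39 (mult39 r) a)))
     [0..<13]"
  by code_simp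

lemma nonabelian_order39_terrace:
  fixes G :: "'a monoid" (structure)
  assumes "group G" "finite (carrier G)" "card (carrier G) = 39" "\<not> comm_group G"
  shows "\<exists>a. directed_hh_terrace G a"
proof -
  interpret group G by fact
  have order: "order G = 39" using assms(3) unfolding order_def .
  obtain x y and r :: nat where xy: "x \<in> carrier G" "y \<in> carrier G" "x [^] (13::nat) = \<one>" "y [^] (3::nat) = \<one>"
    and rel: "x \<otimes> y = y \<otimes> x [^] r" "r < 13" and nc: "x \<otimes> y \<noteq> y \<otimes> x"
    and bij: "bij_betw (eval39 G x y) (set elems39) (carrier G)"
    by (rule order39_normal_form[OF assms(2) order assms(4)])
  interpret T: table_iso G elems39 "mult39 r" "(0, 0)" "eval39 G x y"
  proof
    show "bij_betw (eval39 G x y) (set elems39) (carrier G)" by (fact bij)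
    show "eval39 G x y (mult39 r p q) = eval39 G x y p \<otimes> eval39 G x y q" for p q
      by (rule eval39_mult39[OF xy rel(1)])
    show "mult39 r p q \<in> set elems39" if "p \<in> set elems39" "q \<in> set elems39" for p q
      using mult39_closed[OF that] .
    show "(0, 0) \<in> set elems39" by (simp add: set_elems39)
    show "eval39 G x y (0, 0) = \<one>" by (simp add: eval39_def)
  qed
  have "r \<in> set [0..<13]" using rel(2) by simp
  then have cert: "mult39 r (0, 1) (1, 0) = mult39 r (1, 0) (0, 1)
      \<or> nonassoc_witness (mult39 r) (0, 1) (1, 0) (2, 0)
      \<or> (case terraces39 r of None \<Rightarrow> False | Some a \<Rightarrow>
           table_directed_hh_terrace elems39 (mult39 r) (0, 0) a (table_quotients elems39 (mult39 r) a))"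
    using certificates39 by (simp only: list_all_iff)
  have "eval39 G x y (0, 1) \<otimes> eval39 G x y (1, 0) \<noteq> eval39 G x y (1, 0) \<otimes> eval39 G x y (0, 1)"
    using xy nc by (simp add: eval39_def)
  from T.certificate_cases[OF cert this] obtain a where
      "table_directed_hh_terrace elems39 (mult39 r) (0, 0) a (table_quotients elems39 (mult39 r) a)"
    by (auto simp: set_elems39 split: option.splits)
  then show ?thesis using T.directed_hh_terrace_map by blast
qed

theorem theorem11:
  fixes G :: "'a monoid" and H :: "'b monoid"
  shows "(group G \<and> finite (carrier G) \<and> card (carrier G) = 27 \<and> \<not> comm_group G \<longrightarrow>
            (\<exists>a. narcissistic G a) \<and> (\<exists>a. directed_hh_terrace G a))
       \<and> (group H \<and> finite (carrier H) \<and> card (carrier H) = 39 \<and> \<not> comm_group H \<longrightarrow>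
            (\<exists>a. directed_hh_terrace H a))"
  using nonabelian_order27_terraces[of G] nonabelian_order39_terrace[of H] by blast

end
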